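(* For every integer $g\ge 1$ there exist polynomials $E_g,F_g\in\mathbb{C}[x]$ (with coefficients depending on $T$) such that $$w_{2,0}^{(g)}(x)=\frac{E_g(x)}{y(x)^{3g+3}}+\frac{F_g(x)}{y(x)^{3g+4}},$$ where $\deg E_g\le g+1$, $\deg F_g\le g+2$, $E_g(-x)=(-1)^{g+1}E_g(x)$, $F_g(-x)=(-1)^{g}F_g(x)$, and the coefficient of $x^{g+1}$ in $E_g$ is the negative of the coefficient of $x^{g+2}$ in $F_g$.
   Context: Fix $T>0$. Let $y(x)=\sqrt{x^2-4T}$ denote the branch analytic on $\mathbb{C}\setminus[-2\sqrt T,2\sqrt T]$ with $y(x)\sim x$ as $x\to\infty$; write $y_i=y(x_i)$. Let $\hbar$ be a parameter (in the application $\hbar=\sqrt{\kappa}-1/\sqrt{\kappa}$, where $\beta=2\kappa$ is the Dyson index of the Gaussian $\beta$-ensemble $\prod_{i<j}|\lambda_i-\lambda_j|^{2\kappa}e^{-\frac{N\kappa}{T}\sum_i\lambda_i^2/2}$). The functions $W_n^{(g)}(x_1,\dots,x_n)$, $n\ge1$, $g\ge0$ (the coefficients of the large-$N$ expansion of the connected correlators of that ensemble), are the symmetric functions determined recursively as follows: $W_1^{(0)}(x)=\tfrac12(x-y(x))$; by convention $W_n^{(-1)}=W_n^{(-2)}=0$; and for every $(n,g)$ with $n\ge1$, $g\ge0$, $(n,g)\neq(1,0)$, writing $I=(x_1,\dots,x_{n-1})$, $$y(x)W_n^{(g)}(x,I)=\hbar\,\partial_xW_n^{(g-1)}(x,I)+W_{n+1}^{(g-2)}(x,x,I)+{\sum_{J\subseteq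 I}}'\sum_{p=0}^{g}W_{|J|+1}^{(p)}(x,J)\,W_{n-|J|}^{(g-p)}(x,I\setminus J)+\sum_{i=1}^{n-1}\frac{\partial}{\partial x_i}\frac{W_{n-1}^{(g)}(x,I\setminus\{x_i\})-W_{n-1}^{(g)}(I)}{x-x_i},$$ where the primed double sum omits the two terms $(J=\emptyset,p=0)$ and $(J=I,p=g)$, and for $n=1$ the last sum is empty. These functions are rational in the $x_i$ and $y_i$, regular on the diagonals, and each $W_n^{(g)}$ is a polynomial in $\hbar$ of degree at most $g$ containing only powers $\hbar^j$ with $j\equiv g \pmod 2$. For $k\ge1$, $g\ge0$ and $0\le r\le g/2$, $w_{k,2r}^{(g)}(x)$ denotes the coefficient of $\hbar^{g-2r}$ in $W_k^{(g)}(x,\dots,x)$ (all $k$ arguments equal to $x$). Thus $w_{2,0}^{(g)}(x)$ is the coefficient of $\hbar^g$ in $W_2^{(g)}(x,x)$. *)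

theory Defs
  imports "HOL-Analysis.Analysis" "HOL-Computational_Algebra.Polynomial"
begin

definition cutdom :: "real \<Rightarrow> complex set" where
  "cutdom T = - (complex_of_real ` {-2 * sqrt T .. 2 * sqrt T})"

text \<open>The branch of sqrt(x^2 - 4T) analytic off the cut with y(x) ~ x at infinity.\<close>
definition ybr :: "real \<Rightarrow> complex \<Rightarrow> complex" where
  "ybr T x = x * csqrt (1 - 4 * complex_of_real T / x\<^sup>2)"

text \<open>Right-hand side of the loop equation.  W h g xs stands for W_n^{(g)}(xs)
  at parameter value hbar = h, where n = length xs.  Sub-lists J of I are encoded
  by their sets of positions S.\<close>
definition loop_rhs ::
  "(complex \<Rightarrow> nat \<Rightarrow> complex list \<Rightarrow> complex) \<Rightarrow> complex \<Rightarrow> nat \<Rightarrow> complex \<Rightarrow> complex list \<Rightarrow> complex" where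
  "loop_rhs W h g x I =
     (if 1 \<le> g then h * deriv (\<lambda>t. W h (g - 1) (t # I)) x else 0)
   + (if 2 \<le> g then W h (g - 2) (x # x # I) else 0)
   + (\<Sum>S\<in>Pow {..<length I}. \<Sum>p\<le>g.
        if (S = {} \<and> p = 0) \<or> (S = {..<length I} \<and> p = g) then 0
        else W h p (x # nths I S) * W h (g - p) (x # nths I ({..<length I} - S)))
   + (\<Sum>i<length I. deriv (\<lambda>t. (W h g (x # nths I (- {i})) - W h g (I[i := t])) / (x - t)) (I ! i))"

text \<open>W is the family of connected-correlator coefficients: initial condition,
  holomorphic (regular, including on diagonals) in each variable on the cut plane,
  and satisfying the loop equations (off the diagonals x = x_i).\<close>
definition is_corr_family :: "real \<Rightarrow> (complex \<Rightarrow> nat \<Rightarrow> complex list \<Rightarrow> complex) \<Rightarrow> bool" where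
  "is_corr_family T W \<longleftrightarrow>
     (\<forall>h. \<forall>x\<in>cutdom T. W h 0 [x] = (x - ybr T x) / 2)
   \<and> (\<forall>h g xs i. set xs \<subseteq> cutdom T \<and> i < length xs \<longrightarrow>
        (\<lambda>t. W h g (xs[i := t])) holomorphic_on cutdom T)
   \<and> (\<forall>h g x I. (length I, g) \<noteq> (0, 0) \<and> x \<in> cutdom T \<and> set I \<subseteq> cutdom T \<and> x \<notin> set I \<longrightarrow>
        ybr T x * W h g (x # I) = loop_rhs W h g x I)"

definition hcoeff :: "(complex \<Rightarrow> complex) \<Rightarrow> nat \<Rightarrow> complex" where
  "hcoeff f k = coeff (THE p. \<forall>h. f h = poly p h) k"

definition w20 :: "(complex \<Rightarrow> nat \<Rightarrow> complex list \<Rightarrow> complex) \<Rightarrow> nat \<Rightarrow> complex \<Rightarrow> complex" where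
  "w20 W g x = hcoeff (\<lambda>h. W h g [x, x]) g"

end

theory Submission
  imports Defs "HOL-Complex_Analysis.Complex_Analysis"
begin

(* Structure of the proof.
   1. For fixed arguments, W_n^(g) is a polynomial of degree at most g in the parameter h.
      This is proved by induction on 2g + n from the loop equation; Lagrange interpolation in h
      lets h-coefficients commute with derivatives in the x_i and extends the claim across the
      diagonals by continuity.
   2. Taking the coefficient of h^g in the loop equations for n = 1 and n = 2 yields closed
      recursions for the top coefficients top1 g x and top2 g a b: the terms W^(g-2) drop out
      for degree reasons.  Expanding a |-> top2 g a b in Taylor coefficients C_{g,m}(b) at a = b
      gives a recursion for C_{g,m} in terms of C_{g',m'} with (g', m') lexicographically smaller;
      C_{g,0}(x) is w_{2,0}^(g)(x).
   3. The functions (E y + F) / y^K with deg E <= D - 1, deg F <= D, prescribed parities and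
      prescribed value L of coeff E (D - 1) + coeff F D form a class closed under sums, products,
      derivatives and division by y.  A double induction on (g, m) puts C_{g,m} into this class
      with K = 3g + 2m + 4, D = g + m + 2 and L = 0, which for m = 0 is the theorem. *)

section \<open>Polynomials in the parameter\<close>

definition hpoly :: "nat \<Rightarrow> (complex \<Rightarrow> complex) \<Rightarrow> bool" where
  "hpoly d f \<longleftrightarrow> (\<exists>p. degree p \<le> d \<and> f = poly p)"

text \<open>Coefficient extraction is well defined: a polynomial function over the
  infinite field of complex numbers determines its coefficients.\<close>
lemma hcoeff_poly: "f = poly p \<Longrightarrow> hcoeff f k = coeff p k"
proof -
  assume f: "f = poly p"
  have "(THE q. \<forall>h. f h = poly q h) = p"
    by (rule the_equality) (auto simp: f poly_eq_poly_eq_iff[symmetric] fun_eq_iff)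
  thus ?thesis by (simp add: hcoeff_def)
qed

lemma hpoly_const: "hpoly d (\<lambda>h. c)"
  unfolding hpoly_def by (rule exI[of _ "[:c:]"]) auto

lemma hpoly_mono: "hpoly d f \<Longrightarrow> d \<le> e \<Longrightarrow> hpoly e f"
  unfolding hpoly_def by (metis order.trans)

lemma hpoly_add: "hpoly d f \<Longrightarrow> hpoly d g \<Longrightarrow> hpoly d (\<lambda>h. f h + g h)"
  unfolding hpoly_def apply clarify
  subgoal for p q by (rule exI[of _ "p+q"]) (auto intro: order.trans[OF degree_add_le_max])
  done

lemma hpoly_diff: "hpoly d f \<Longrightarrow> hpoly d g \<Longrightarrow> hpoly d (\<lambda>h. f h - g h)"
  unfolding hpoly_def apply clarify
  subgoal for p q by (rule exI[of _ "p-q"]) (auto intro: order.trans[OF degree_diff_le_max])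
  done

lemma hpoly_cmult: "hpoly d f \<Longrightarrow> hpoly d (\<lambda>h. c * f h)"
  unfolding hpoly_def apply clarify
  subgoal for p by (rule exI[of _ "smult c p"]) auto
  done

lemma hpoly_multc: "hpoly d f \<Longrightarrow> hpoly d (\<lambda>h. f h * c)"
  using hpoly_cmult[of d f c] by (simp add: mult.commute)

lemma hpoly_divc: "hpoly d f \<Longrightarrow> hpoly d (\<lambda>h. f h / c)"
  using hpoly_multc[of d f "inverse c"] by (simp add: divide_inverse)

lemma hpoly_mult: "hpoly d f \<Longrightarrow> hpoly e g \<Longrightarrow> hpoly (d + e) (\<lambda>h. f h * g h)"
  unfolding hpoly_def apply clarify
  subgoal for p q using degree_mult_le[of p q] by (intro exI[of _ "p*q"]) auto
  done

lemma hpoly_h: "hpoly d f \<Longrightarrow> hpoly (Suc d) (\<lambda>h. h * f h)"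
  unfolding hpoly_def apply clarify
  subgoal for p using degree_mult_le[of "[:0,1:]" p] by (intro exI[of _ "[:0,1:]*p"]) auto
  done

lemma hpoly_sum: "finite A \<Longrightarrow> (\<And>a. a \<in> A \<Longrightarrow> hpoly d (f a)) \<Longrightarrow> hpoly d (\<lambda>h. \<Sum>a\<in>A. f a h)"
proof (induction A rule: finite_induct)
  case empty thus ?case using hpoly_const[of d 0] by simp
next
  case (insert a A)
  have "hpoly d (\<lambda>h. f a h + (\<Sum>a\<in>A. f a h))"
    by (rule hpoly_add) (use insert in auto)
  thus ?case using insert by simp
qed

lemma hpoly_if: "(P \<Longrightarrow> hpoly d f) \<Longrightarrow> (\<not>P \<Longrightarrow> hpoly d g) \<Longrightarrow> hpoly d (\<lambda>h. if P then f h else g h)"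
  by (cases P) auto

lemma hpoly_obtain_poly: "hpoly d f \<Longrightarrow> \<exists>p. degree p \<le> d \<and> f = poly p \<and> (\<forall>k. hcoeff f k = coeff p k)"
  unfolding hpoly_def using hcoeff_poly by blast

lemma hcoeff_add: "hpoly d f \<Longrightarrow> hpoly e g \<Longrightarrow> hcoeff (\<lambda>h. f h + g h) k = hcoeff f k + hcoeff g k"
proof -
  assume "hpoly d f" "hpoly e g"
  then obtain p q where pq: "f = poly p" "g = poly q" unfolding hpoly_def by blast
  have "(\<lambda>h. f h + g h) = poly (p + q)" by (auto simp: pq fun_eq_iff)
  thus ?thesis using hcoeff_poly pq by simp
qed

lemma hcoeff_diff: "hpoly d f \<Longrightarrow> hpoly e g \<Longrightarrow> hcoeff (\<lambda>h. f h - g h) k = hcoeff f k - hcoeff g k"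
proof -
  assume "hpoly d f" "hpoly e g"
  then obtain p q where pq: "f = poly p" "g = poly q" unfolding hpoly_def by blast
  have "(\<lambda>h. f h - g h) = poly (p - q)" by (auto simp: pq fun_eq_iff)
  thus ?thesis using hcoeff_poly pq by simp
qed

lemma hcoeff_cmult: "hpoly d f \<Longrightarrow> hcoeff (\<lambda>h. c * f h) k = c * hcoeff f k"
proof -
  assume "hpoly d f"
  then obtain p where pq: "f = poly p" unfolding hpoly_def by blast
  have "(\<lambda>h. c * f h) = poly (smult c p)" by (auto simp: pq fun_eq_iff)
  thus ?thesis using hcoeff_poly pq by simp
qed

lemma hcoeff_divc: "hpoly d f \<Longrightarrow> hcoeff (\<lambda>h. f h / c) k = hcoeff f k / c"
  using hcoeff_cmult[of d f "inverse c" k] by (simp add: divide_inverse mult.commute)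

lemma hcoeff_const: "hcoeff (\<lambda>h. c) k = (if k = 0 then c else 0)"
proof -
  have "(\<lambda>h. c) = poly [:c:]" by auto
  thus ?thesis using hcoeff_poly by (simp add: coeff_pCons split: nat.split)
qed

lemma hcoeff_h: "hpoly d f \<Longrightarrow> hcoeff (\<lambda>h. h * f h) (Suc k) = hcoeff f k"
proof -
  assume "hpoly d f"
  then obtain p where pq: "f = poly p" unfolding hpoly_def by blast
  have "(\<lambda>h. h * f h) = poly (pCons 0 p)" by (auto simp: pq fun_eq_iff)
  thus ?thesis using hcoeff_poly pq by simp
qed

lemma hcoeff_high: "hpoly d f \<Longrightarrow> d < k \<Longrightarrow> hcoeff f k = 0"
proof -
  assume a: "hpoly d f" "d < k"
  then obtain p where "degree p \<le> d" "\<forall>k. hcoeff f k = coeff p k" using hpoly_obtain_poly by blast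
  thus ?thesis using a(2) coeff_eq_0[of p k] by simp
qed

lemma coeff_mult_top:
  fixes p q :: "'a::idom poly"
  assumes "degree p \<le> d" "degree q \<le> e"
  shows "coeff (p * q) (d + e) = coeff p d * coeff q e"
proof (cases "degree p = d \<and> degree q = e")
  case True thus ?thesis using coeff_mult_degree_sum[of p q] by simp
next
  case False
  hence "degree p < d \<or> degree q < e" using assms by auto
  hence "degree (p*q) < d + e" using degree_mult_le[of p q] assms by linarith
  hence "coeff (p*q) (d+e) = 0" by (simp add: coeff_eq_0)
  moreover have "coeff p d * coeff q e = 0" using \<open>degree p < d \<or> degree q < e\<close> by (auto simp: coeff_eq_0)
  ultimately show ?thesis by simp
qed

lemma hcoeff_mult: "hpoly d f \<Longrightarrow> hpoly e g \<Longrightarrow> hcoeff (\<lambda>h. f h * g h) (d + e) = hcoeff f d * hcoeff g e"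
proof -
  assume "hpoly d f" "hpoly e g"
  then obtain p q where pq: "f = poly p" "g = poly q" "degree p \<le> d" "degree q \<le> e" unfolding hpoly_def by blast
  have "(\<lambda>h. f h * g h) = poly (p * q)" by (auto simp: pq fun_eq_iff)
  thus ?thesis using hcoeff_poly pq coeff_mult_top by simp
qed

lemma hcoeff_sum: "finite A \<Longrightarrow> (\<And>a. a \<in> A \<Longrightarrow> hpoly d (f a)) \<Longrightarrow>
   hcoeff (\<lambda>h. \<Sum>a\<in>A. f a h) k = (\<Sum>a\<in>A. hcoeff (f a) k)"
proof (induction A rule: finite_induct)
  case empty thus ?case using hcoeff_const[of 0 k] by simp
next
  case (insert a A)
  have "hcoeff (\<lambda>h. f a h + (\<Sum>a\<in>A. f a h)) k = hcoeff (f a) k + hcoeff (\<lambda>h. \<Sum>a\<in>A. f a h) k"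
    by (rule hcoeff_add[of d _ d]) (use insert in \<open>auto intro!: hpoly_sum\<close>)
  thus ?case using insert by simp
qed

lemma hcoeff_if: "hcoeff (\<lambda>h. if P then f h else g h) k = (if P then hcoeff f k else hcoeff g k)"
  by (cases P) auto

lemma hpoly_convolution:
  assumes F: "\<And>p. hpoly p (F p)" and G: "\<And>q. hpoly q (G q)"
  shows "hpoly g (\<lambda>h. \<Sum>p\<le>g. if P p then 0 else F p h * G (g - p) h)"
    and "hcoeff (\<lambda>h. \<Sum>p\<le>g. if P p then 0 else F p h * G (g - p) h) g =
         (\<Sum>p\<le>g. if P p then 0 else hcoeff (F p) p * hcoeff (G (g - p)) (g - p))"
proof -
  have each: "hpoly g (\<lambda>h. if P p then 0 else F p h * G (g - p) h)" if "p \<in> {..g}" for p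
    using hpoly_mult[OF F G, of p "g - p"] that by (intro hpoly_if hpoly_const) auto
  show "hpoly g (\<lambda>h. \<Sum>p\<le>g. if P p then 0 else F p h * G (g - p) h)"
    by (intro hpoly_sum each) auto
  show "hcoeff (\<lambda>h. \<Sum>p\<le>g. if P p then 0 else F p h * G (g - p) h) g =
        (\<Sum>p\<le>g. if P p then 0 else hcoeff (F p) p * hcoeff (G (g - p)) (g - p))"
  proof -
    have top: "hcoeff (\<lambda>h. F p h * G (g - p) h) g = hcoeff (F p) p * hcoeff (G (g - p)) (g - p)" if "p \<le> g" for p
      using hcoeff_mult[OF F G, of p "g - p"] that by simp
    show ?thesis
      using hcoeff_const[of 0 g] top by (subst hcoeff_sum[OF _ each]) (auto simp: hcoeff_if intro!: sum.cong)
  qed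
qed

subsection \<open>Lagrange interpolation in the parameter\<close>

text \<open>A polynomial function of degree at most d is the fixed linear combination, with the
  Lagrange basis polynomials at the nodes 0, ..., d, of its values at these nodes.  This
  reduces statements about a whole family in h to finitely many members.\<close>

definition lagrange_basis :: "nat \<Rightarrow> nat \<Rightarrow> complex poly" where
  "lagrange_basis d j = smult (1 / (\<Prod>i\<in>{..d}-{j}. (of_nat j - of_nat i))) (\<Prod>i\<in>{..d}-{j}. [:- of_nat i, 1:])"

lemma degree_lagrange_basis: "j \<le> d \<Longrightarrow> degree (lagrange_basis d j) \<le> d"
proof -
  assume "j \<le> d"
  have "degree (\<Prod>i\<in>{..d}-{j}. [:- of_nat i, 1:] :: complex poly) \<le> (\<Sum>i\<in>{..d}-{j}. degree ([:- of_nat i, 1:] :: complex poly))"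
    using degree_prod_sum_le[of "{..d}-{j}" "\<lambda>i. [:- of_nat i, 1:] :: complex poly"] by (simp add: o_def)
  also have "\<dots> = card ({..d}-{j})" by simp
  also have "\<dots> \<le> d" using \<open>j \<le> d\<close> by (simp add: card_Diff_singleton)
  finally show ?thesis unfolding lagrange_basis_def using degree_smult_le le_trans by blast
qed

lemma poly_lagrange_basis: "i \<le> d \<Longrightarrow> j \<le> d \<Longrightarrow> poly (lagrange_basis d j) (of_nat i) = (if i = j then 1 else 0)"
proof -
  assume ij: "i \<le> d" "j \<le> d"
  have P: "poly (\<Prod>i\<in>{..d}-{j}. [:- of_nat i, 1:]) z = (\<Prod>k\<in>{..d}-{j}. (z - of_nat k))" for z :: complex
    by (simp add: poly_prod)
  show ?thesis
  proof (cases "i = j")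
    case True
    have "(\<Prod>k\<in>{..d}-{j}. (of_nat j - of_nat k :: complex)) \<noteq> 0" by (auto simp: prod_zero_iff)
    thus ?thesis using True by (simp add: lagrange_basis_def P)
  next
    case False
    have "(\<Prod>k\<in>{..d}-{j}. (of_nat i - of_nat k :: complex)) = 0"
      using ij False by (intro prod_zero) auto
    thus ?thesis using False by (simp add: lagrange_basis_def P)
  qed
qed

lemma lagrange_interp:
  assumes "degree p \<le> d"
  shows "p = (\<Sum>j\<le>d. smult (poly p (of_nat j)) (lagrange_basis d j))"
proof (rule ccontr)
  define q where "q = p - (\<Sum>j\<le>d. smult (poly p (of_nat j)) (lagrange_basis d j))"
  assume "p \<noteq> (\<Sum>j\<le>d. smult (poly p (of_nat j)) (lagrange_basis d j))"
  hence q0: "q \<noteq> 0" by (simp add: q_def)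
  have dq: "degree q \<le> d"
    unfolding q_def
    by (intro order.trans[OF degree_diff_le_max] max.boundedI assms degree_sum_le)
       (auto intro: order.trans[OF degree_smult_le] degree_lagrange_basis)
  have rt: "poly q (of_nat i) = 0" if i: "i \<in> {..d}" for i
  proof -
    have "poly (\<Sum>j\<le>d. smult (poly p (of_nat j)) (lagrange_basis d j)) (of_nat i) = (\<Sum>j\<le>d. poly p (of_nat j) * (if i = j then 1 else 0))"
      using i by (auto simp: poly_sum poly_lagrange_basis intro!: sum.cong)
    also have "\<dots> = (\<Sum>j\<le>d. if i = j then poly p (of_nat j) else 0)" by (intro sum.cong) auto
    also have "\<dots> = poly p (of_nat i)" using i by (simp add: sum.delta[of "{..d}" i "\<lambda>j. poly p (of_nat j)", simplified])
    finally show "poly q (of_nat i) = 0" by (simp add: q_def)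
  qed
  have roots: "of_nat ` {..d} \<subseteq> {x. poly q x = 0}" using rt by auto
  have c1: "card (of_nat ` {..d} :: complex set) = Suc d" by (simp add: card_image inj_on_def)
  have "card (of_nat ` {..d} :: complex set) \<le> card {x. poly q x = 0}"
    by (intro card_mono poly_roots_finite q0 roots)
  also have "\<dots> \<le> degree q" by (rule card_poly_roots_bound[OF q0])
  finally show False using c1 dq by simp
qed

lemma hpoly_lagrange:
  assumes "hpoly d f"
  shows "f h = (\<Sum>j\<le>d. poly (lagrange_basis d j) h * f (of_nat j))"
proof -
  obtain p where p: "degree p \<le> d" "f = poly p" using assms unfolding hpoly_def by blast
  have "f h = poly (\<Sum>j\<le>d. smult (poly p (of_nat j)) (lagrange_basis d j)) h"
    using lagrange_interp[OF p(1)] p(2) by simp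
  thus ?thesis by (simp add: poly_sum p(2) mult_ac)
qed

lemma hpoly_of_lagrange:
  assumes "\<And>h. f h = (\<Sum>j\<le>d. poly (lagrange_basis d j) h * c j)"
  shows "hpoly d f"
proof -
  have "f = poly (\<Sum>j\<le>d. smult (c j) (lagrange_basis d j))"
    by (auto simp: fun_eq_iff assms poly_sum mult_ac)
  moreover have "degree (\<Sum>j\<le>d. smult (c j) (lagrange_basis d j)) \<le> d"
    by (intro degree_sum_le) (auto intro: order.trans[OF degree_smult_le] degree_lagrange_basis)
  ultimately show ?thesis unfolding hpoly_def by blast
qed

lemma hcoeff_lagrange:
  assumes "hpoly d f"
  shows "hcoeff f k = (\<Sum>j\<le>d. coeff (lagrange_basis d j) k * f (of_nat j))"
proof -
  have eq: "f h = poly (\<Sum>j\<le>d. smult (f (of_nat j)) (lagrange_basis d j)) h" for h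
  proof -
    have "poly (\<Sum>j\<le>d. smult (f (of_nat j)) (lagrange_basis d j)) h = (\<Sum>j\<le>d. f (of_nat j) * poly (lagrange_basis d j) h)"
      by (simp add: poly_sum)
    also have "\<dots> = (\<Sum>j\<le>d. poly (lagrange_basis d j) h * f (of_nat j))" by (simp add: mult.commute)
    finally have X: "poly (\<Sum>j\<le>d. smult (f (of_nat j)) (lagrange_basis d j)) h = (\<Sum>j\<le>d. poly (lagrange_basis d j) h * f (of_nat j))" .
    show ?thesis unfolding X by (rule hpoly_lagrange[OF assms])
  qed
  have "f = poly (\<Sum>j\<le>d. smult (f (of_nat j)) (lagrange_basis d j))" by (rule ext, rule eq)
  from hcoeff_poly[OF this] show ?thesis by (simp add: coeff_sum mult_ac)
qed

section \<open>The cut plane and the branch y\<close>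

lemma open_cutdom: "open (cutdom T)"
proof -
  have "compact (complex_of_real ` {-2 * sqrt T .. 2 * sqrt T})"
    by (intro compact_continuous_image continuous_intros) auto
  thus ?thesis unfolding cutdom_def by (intro open_Compl compact_imp_closed)
qed

lemma cutdom_real: "T > 0 \<Longrightarrow> (x::real) \<in> {-2 * sqrt T .. 2 * sqrt T} \<Longrightarrow> complex_of_real x \<notin> cutdom T"
  unfolding cutdom_def by auto

lemma cutdom_nz: "T > 0 \<Longrightarrow> x \<in> cutdom T \<Longrightarrow> x \<noteq> 0"
  using cutdom_real[of T 0] by auto

lemma sq_eq_real:
  fixes z :: complex
  assumes "z^2 = complex_of_real c" "c \<ge> 0"
  shows "z = complex_of_real (sqrt c) \<or> z = - complex_of_real (sqrt c)"
proof -
  have "(z - complex_of_real (sqrt c)) * (z + complex_of_real (sqrt c)) = z^2 - complex_of_real (sqrt c)^2"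
    by (simp add: algebra_simps power2_eq_square)
  also have "complex_of_real (sqrt c)^2 = complex_of_real c" using assms(2)
    by (simp flip: of_real_power)
  finally have "(z - complex_of_real (sqrt c)) * (z + complex_of_real (sqrt c)) = 0" using assms(1) by simp
  hence "z - complex_of_real (sqrt c) = 0 \<or> z + complex_of_real (sqrt c) = 0" by simp
  thus ?thesis by (metis eq_neg_iff_add_eq_0 right_minus_eq)
qed

lemma ybr_sq: "x \<noteq> 0 \<Longrightarrow> ybr T x ^ 2 = x^2 - 4 * complex_of_real T"
  unfolding ybr_def by (simp add: power_mult_distrib field_simps)

text \<open>No point of the cut plane has its square in [0, 4T].  This is why y neither
  vanishes nor hits the branch cut of the principal square root there.\<close>
lemma sq_in_cut:
  assumes T: "T > 0" and x: "x \<in> cutdom T" and c: "x^2 = complex_of_real c" "0 \<le> c" "c \<le> 4 * T"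
  shows False
proof -
  have "sqrt c \<le> 2 * sqrt T"
  proof -
    have "sqrt c \<le> sqrt (4 * T)" using c(3) by simp
    also have "sqrt (4*T) = 2 * sqrt T" by (simp add: real_sqrt_mult)
    finally show ?thesis .
  qed
  moreover have "sqrt c \<ge> 0" using c(2) by simp
  moreover have "sqrt T \<ge> 0" using T by simp
  ultimately have "sqrt c \<in> {-2 * sqrt T .. 2 * sqrt T}" "- sqrt c \<in> {-2 * sqrt T .. 2 * sqrt T}"
    unfolding atLeastAtMost_iff by linarith+
  thus False using sq_eq_real[OF c(1,2)] x cutdom_real[OF T] by fastforce
qed

lemma ybr_nz: "T > 0 \<Longrightarrow> x \<in> cutdom T \<Longrightarrow> ybr T x \<noteq> 0"
proof
  assume T: "T > 0" and x: "x \<in> cutdom T" and y: "ybr T x = 0"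
  have "x^2 - 4 * complex_of_real T = 0" using ybr_sq[OF cutdom_nz[OF T x], of T] y by simp
  hence "x^2 = complex_of_real (4*T)" by simp
  thus False using sq_in_cut[OF T x, of "4*T"] T by simp
qed

lemma ybr_holo: assumes T: "T > 0" shows "ybr T holomorphic_on cutdom T"
  unfolding ybr_def
proof (intro holomorphic_intros)
  fix z assume z: "z \<in> cutdom T"
  have z0: "z \<noteq> 0" using cutdom_nz[OF T z] .
  show "z^2 \<noteq> 0" using z0 by simp
  show "1 - 4 * complex_of_real T / z\<^sup>2 \<notin> \<real>\<^sub>\<le>\<^sub>0"
  proof
    assume "1 - 4 * complex_of_real T / z\<^sup>2 \<in> \<real>\<^sub>\<le>\<^sub>0"
    then obtain r where r: "1 - 4 * complex_of_real T / z\<^sup>2 = complex_of_real r" "r \<le> 0"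
      by (auto simp: nonpos_Reals_def)
    have "4 * complex_of_real T / z\<^sup>2 = complex_of_real (1 - r)" using r(1) by (simp add: algebra_simps)
    hence "z^2 = complex_of_real (4 * T / (1 - r))" using z0 r(2)
      by (simp add: field_simps)
    moreover have "4 * T / (1 - r) \<le> 4 * T" using r(2) T by (simp add: field_simps mult_nonneg_nonpos)
    moreover have "0 \<le> 4 * T / (1 - r)" using r(2) T by simp
    ultimately show False using sq_in_cut[OF T z] by blast
  qed
qed

lemma ybr_deriv:
  assumes T: "T > 0" and x: "x \<in> cutdom T"
  shows "(ybr T has_field_derivative x / ybr T x) (at x)" "deriv (ybr T) x = x / ybr T x"
proof -
  have d: "(ybr T has_field_derivative deriv (ybr T) x) (at x)"
    using holomorphic_derivI[OF ybr_holo[OF T] open_cutdom x] .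
  have "((\<lambda>t. ybr T t ^ 2) has_field_derivative 2 * ybr T x * deriv (ybr T) x) (at x)"
    using DERIV_power[OF d, of 2] by (simp add: mult_ac)
  moreover have "((\<lambda>t. ybr T t ^ 2) has_field_derivative 2 * x) (at x)"
  proof -
    have "((\<lambda>t. t ^ 2 - 4 * complex_of_real T) has_field_derivative 2 * x) (at x)"
      by (auto intro!: derivative_eq_intros)
    moreover have e: "eventually (\<lambda>t. t ^ 2 - 4 * complex_of_real T = ybr T t ^ 2) (nhds x)"
      using eventually_nhds_in_open[OF open_cutdom x] 
      by eventually_elim (use cutdom_nz[OF T] ybr_sq in auto)
    ultimately show ?thesis using DERIV_cong_ev[OF refl e refl] by blast
  qed
  ultimately have "2 * ybr T x * deriv (ybr T) x = 2 * x" using DERIV_unique by blast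
  hence "deriv (ybr T) x = x / ybr T x" using ybr_nz[OF T x] by (simp add: field_simps)
  thus "deriv (ybr T) x = x / ybr T x" "(ybr T has_field_derivative x / ybr T x) (at x)" using d by auto
qed

lemma deriv_lincomb:
  assumes S: "open S" "t0 \<in> S" and A: "finite A" and G: "\<And>j. j \<in> A \<Longrightarrow> G j holomorphic_on S"
    and f: "\<And>t. t \<in> S \<Longrightarrow> f t = (\<Sum>j\<in>A. c j * G j t)"
  shows "deriv f t0 = (\<Sum>j\<in>A. c j * deriv (G j) t0)" "f holomorphic_on S"
proof -
  have e: "eventually (\<lambda>t. (\<Sum>j\<in>A. c j * G j t) = f t) (nhds t0)"
    using eventually_nhds_in_open[OF S] by eventually_elim (use f in auto)
  have "((\<lambda>t. \<Sum>j\<in>A. c j * G j t) has_field_derivative (\<Sum>j\<in>A. c j * deriv (G j) t0)) (at t0)"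
    by (intro DERIV_sum DERIV_cmult holomorphic_derivI[OF G S(1,2)])
  hence "(f has_field_derivative (\<Sum>j\<in>A. c j * deriv (G j) t0)) (at t0)"
    using DERIV_cong_ev[OF refl e refl] by blast
  thus "deriv f t0 = (\<Sum>j\<in>A. c j * deriv (G j) t0)" by (rule DERIV_imp_deriv)
  have "(\<lambda>t. \<Sum>j\<in>A. c j * G j t) holomorphic_on S" by (intro holomorphic_intros G)
  thus "f holomorphic_on S" by (rule holomorphic_transform) (use f in auto)
qed

text \<open>For a holomorphic family F h that is polynomial of degree at most d in h, the
  derivative is again polynomial in h, and differentiation commutes with taking h-coefficients
  (by Lagrange interpolation, F h is a fixed combination of F 0, ..., F d).\<close>
lemma hpoly_family_deriv:
  assumes S: "open S" "t0 \<in> S" and F: "\<And>h. F h holomorphic_on S" and I: "\<And>t. t \<in> S \<Longrightarrow> hpoly d (\<lambda>h. F h t)"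
  shows "hpoly d (\<lambda>h. deriv (F h) t0)"
    and "hcoeff (\<lambda>h. deriv (F h) t0) k = deriv (\<lambda>t. hcoeff (\<lambda>h. F h t) k) t0"
    and "(\<lambda>t. hcoeff (\<lambda>h. F h t) k) holomorphic_on S"
proof -
  have D: "deriv (F h) t0 = (\<Sum>j\<le>d. poly (lagrange_basis d j) h * deriv (F (of_nat j)) t0)" for h
    by (rule deriv_lincomb(1)[OF S]) (use F hpoly_lagrange[OF I] in auto)
  show "hpoly d (\<lambda>h. deriv (F h) t0)" by (rule hpoly_of_lagrange[OF D])
  have Hc: "hcoeff (\<lambda>h. F h t) k = (\<Sum>j\<le>d. coeff (lagrange_basis d j) k * F (of_nat j) t)" if "t \<in> S" for t
    by (rule hcoeff_lagrange[OF I[OF that]])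
  have "deriv (\<lambda>t. hcoeff (\<lambda>h. F h t) k) t0 = (\<Sum>j\<le>d. coeff (lagrange_basis d j) k * deriv (F (of_nat j)) t0)"
    by (rule deriv_lincomb(1)[OF S]) (use F Hc in auto)
  moreover have "hcoeff (\<lambda>h. deriv (F h) t0) k = (\<Sum>j\<le>d. coeff (lagrange_basis d j) k * deriv (F (of_nat j)) t0)"
    by (rule hcoeff_lagrange[OF hpoly_of_lagrange[OF D]])
  ultimately show "hcoeff (\<lambda>h. deriv (F h) t0) k = deriv (\<lambda>t. hcoeff (\<lambda>h. F h t) k) t0" by simp
  show "(\<lambda>t. hcoeff (\<lambda>h. F h t) k) holomorphic_on S"
    by (rule deriv_lincomb(2)[OF S]) (use F Hc in auto)
qed

lemma eq_by_continuity:
  fixes f g :: "complex \<Rightarrow> complex"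
  assumes "isCont f x" "isCont g x" "eventually (\<lambda>t. f t = g t) (at x)"
  shows "f x = g x"
proof -
  have "(f \<longlongrightarrow> f x) (at x)" using assms(1) isCont_def by blast
  moreover have "(f \<longlongrightarrow> g x) (at x)"
    using assms(2) isCont_def tendsto_cong[OF assms(3)] by blast
  ultimately show ?thesis using LIM_unique by blast
qed

lemma eventually_at_avoiding:
  fixes S F :: "complex set"
  assumes "open S" "x \<in> S" "finite F"
  shows "eventually (\<lambda>t. t \<in> S \<and> t \<notin> F) (at x)"
proof -
  have "open (S - (F - {x}))" using assms finite_imp_closed[of "F - {x}"] by (intro open_Diff) auto
  hence "eventually (\<lambda>t. t \<in> S - (F - {x})) (at x)" using assms(2) by (intro eventually_at_in_open') auto
  moreover have "eventually (\<lambda>t. t \<noteq> x) (at x)" by (simp add: eventually_at_filter)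
  ultimately show ?thesis by eventually_elim auto
qed

lemma isCont_holo: "f holomorphic_on S \<Longrightarrow> open S \<Longrightarrow> x \<in> S \<Longrightarrow> isCont f x"
  using holomorphic_on_imp_continuous_on continuous_on_eq_continuous_at by blast

section \<open>The correlators are polynomials of degree at most g in the parameter\<close>

lemma cutdom_ii: "\<i> \<in> cutdom T"
  unfolding cutdom_def using complex_eq_iff by fastforce

lemma corr_init: "is_corr_family T W \<Longrightarrow> x \<in> cutdom T \<Longrightarrow> W h 0 [x] = (x - ybr T x) / 2"
  unfolding is_corr_family_def by blast

lemma corr_holo: "is_corr_family T W \<Longrightarrow> set xs \<subseteq> cutdom T \<Longrightarrow> i < length xs \<Longrightarrow>
    (\<lambda>t. W h g (xs[i := t])) holomorphic_on cutdom T"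
  unfolding is_corr_family_def by blast

lemma corr_loop: "is_corr_family T W \<Longrightarrow> (length I, g) \<noteq> (0, 0) \<Longrightarrow> x \<in> cutdom T \<Longrightarrow>
    set I \<subseteq> cutdom T \<Longrightarrow> x \<notin> set I \<Longrightarrow> ybr T x * W h g (x # I) = loop_rhs W h g x I"
  unfolding is_corr_family_def by blast

lemma corr_holo_first: "is_corr_family T W \<Longrightarrow> set I \<subseteq> cutdom T \<Longrightarrow>
    (\<lambda>t. W h g (t # I)) holomorphic_on cutdom T"
  using corr_holo[of T W "\<i> # I" 0 h g] cutdom_ii[of T] by simp

lemma card_lt_sub: "S \<subseteq> {..<n} \<Longrightarrow> S \<noteq> {..<n} \<Longrightarrow> card S < n"
  using psubset_card_mono[of "{..<n}" S] by auto

lemma length_nths_sub: "S \<subseteq> {..<length I} \<Longrightarrow> length (nths I S) = card S"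
proof -
  assume "S \<subseteq> {..<length I}"
  hence "{i. i < length I \<and> i \<in> S} = S" by auto
  thus ?thesis by (simp add: length_nths)
qed

text \<open>Polynomiality is proved by induction on the weight 2g + n of W_n^(g); this predicate
  says that it holds for all correlators of weight below N.  Every term on the right-hand side
  of the loop equation for W_n^(g) has smaller weight.\<close>
definition hpoly_below :: "real \<Rightarrow> (complex \<Rightarrow> nat \<Rightarrow> complex list \<Rightarrow> complex) \<Rightarrow> nat \<Rightarrow> bool" where
  "hpoly_below T W N \<longleftrightarrow>
     (\<forall>g ys. 2 * g + length ys < N \<longrightarrow> set ys \<subseteq> cutdom T \<longrightarrow> ys \<noteq> [] \<longrightarrow> hpoly g (\<lambda>h. W h g ys))"

lemma hpoly_belowD: "hpoly_below T W N \<Longrightarrow> 2 * g + length ys < N \<Longrightarrow> set ys \<subseteq> cutdom T \<Longrightarrow> ys \<noteq> [] \<Longrightarrow>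
    hpoly g (\<lambda>h. W h g ys)"
  unfolding hpoly_below_def by blast

context
  fixes T :: real and W :: "complex \<Rightarrow> nat \<Rightarrow> complex list \<Rightarrow> complex"
  assumes T: "T > 0" and W: "is_corr_family T W"
begin

lemma loop_deriv_term_hpoly:
  assumes t: "t \<in> cutdom T" and I: "set I \<subseteq> cutdom T" and IH: "hpoly_below T W (2 * g + Suc (length I))"
  shows "hpoly g (\<lambda>h. if 1 \<le> g then h * deriv (\<lambda>s. W h (g - 1) (s # I)) t else 0)"
proof (rule hpoly_if)
  assume g1: "1 \<le> g"
  have "hpoly (g - 1) (\<lambda>h. deriv (\<lambda>s. W h (g - 1) (s # I)) t)"
  proof (rule hpoly_family_deriv(1)[OF open_cutdom t])
    show "(\<lambda>s. W h (g - 1) (s # I)) holomorphic_on cutdom T" for h by (rule corr_holo_first[OF W I])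
    show "hpoly (g - 1) (\<lambda>h. W h (g - 1) (s # I))" if "s \<in> cutdom T" for s
      by (rule hpoly_belowD[OF IH]) (use g1 that I in auto)
  qed
  from hpoly_h[OF this] show "hpoly g (\<lambda>h. h * deriv (\<lambda>s. W h (g - 1) (s # I)) t)" using g1 by simp
qed (rule hpoly_const)

lemma loop_genus_term_hpoly:
  assumes t: "t \<in> cutdom T" and I: "set I \<subseteq> cutdom T" and IH: "hpoly_below T W (2 * g + Suc (length I))"
  shows "hpoly g (\<lambda>h. if 2 \<le> g then W h (g - 2) (t # t # I) else 0)"
proof (rule hpoly_if)
  assume g2: "2 \<le> g"
  have "hpoly (g - 2) (\<lambda>h. W h (g - 2) (t # t # I))"
    by (rule hpoly_belowD[OF IH]) (use g2 t I in auto)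
  thus "hpoly g (\<lambda>h. W h (g - 2) (t # t # I))" by (rule hpoly_mono) simp
qed (rule hpoly_const)

lemma loop_split_term_hpoly:
  assumes t: "t \<in> cutdom T" and I: "set I \<subseteq> cutdom T" and IH: "hpoly_below T W (2 * g + Suc (length I))"
  shows "hpoly g (\<lambda>h. \<Sum>S\<in>Pow {..<length I}. \<Sum>p\<le>g.
        if (S = {} \<and> p = 0) \<or> (S = {..<length I} \<and> p = g) then 0
        else W h p (t # nths I S) * W h (g - p) (t # nths I ({..<length I} - S)))"
proof (intro hpoly_sum finite_Pow_iff[THEN iffD2] finite_lessThan finite_atMost hpoly_if hpoly_const)
  define n where "n = length I"
  fix S p assume S: "S \<in> Pow {..<length I}" and p: "p \<in> {..g}"
    and ne: "\<not> ((S = {} \<and> p = 0) \<or> (S = {..<length I} \<and> p = g))"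
  have S': "S \<subseteq> {..<n}" using S n_def by auto
  have cS: "card S \<le> n" using card_mono[OF _ S'] by simp
  have l1: "length (nths I S) = card S" using S' n_def length_nths_sub by auto
  have l2: "length (nths I ({..<n} - S)) = n - card S"
    using length_nths_sub[of "{..<n} - S" I] S' n_def card_Diff_subset[OF finite_subset[OF S'] S'] by auto
  have m1: "2 * p + length (t # nths I S) < 2 * g + Suc n"
  proof (cases "p = g")
    case True
    hence "card S < n" using ne n_def card_lt_sub[OF S'] by auto
    thus ?thesis using True l1 by simp
  qed (use p l1 cS in auto)
  have m2: "2 * (g - p) + length (t # nths I ({..<n} - S)) < 2 * g + Suc n"
  proof (cases "p = 0")
    case True
    hence "card S > 0" using ne S' finite_subset[OF S'] by (auto simp: card_gt_0_iff)
    thus ?thesis using True l2 cS by simp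
  qed (use p l2 cS in auto)
  have A: "hpoly p (\<lambda>h. W h p (t # nths I S))"
    by (rule hpoly_belowD[OF IH]) (use m1 n_def t I set_nths_subset[of I S] in auto)
  have B: "hpoly (g - p) (\<lambda>h. W h (g - p) (t # nths I ({..<length I} - S)))"
    by (rule hpoly_belowD[OF IH]) (use m2 n_def t I set_nths_subset[of I "{..<length I} - S"] in auto)
  from hpoly_mult[OF A B]
  show "hpoly g (\<lambda>h. W h p (t # nths I S) * W h (g - p) (t # nths I ({..<length I} - S)))"
    using p by simp
qed

lemma loop_quotient_term_hpoly:
  assumes t: "t \<in> cutdom T" "t \<notin> set I" and I: "set I \<subseteq> cutdom T"
    and IH: "hpoly_below T W (2 * g + Suc (length I))"
  shows "hpoly g (\<lambda>h. \<Sum>i<length I. deriv (\<lambda>s. (W h g (t # nths I (- {i})) - W h g (I[i := s])) / (t - s)) (I ! i))"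
proof (intro hpoly_sum finite_lessThan)
  fix i assume i: "i \<in> {..<length I}"
  have Ii: "I ! i \<in> cutdom T - {t}" using i I t(2) nth_mem[of i I] by auto
  have oS: "open (cutdom T - {t})" by (intro open_Diff open_cutdom) auto
  show "hpoly g (\<lambda>h. deriv (\<lambda>s. (W h g (t # nths I (- {i})) - W h g (I[i := s])) / (t - s)) (I ! i))"
  proof (rule hpoly_family_deriv(1)[OF oS Ii])
    fix h
    have "(\<lambda>s. W h g (I[i := s])) holomorphic_on cutdom T - {t}"
      by (rule holomorphic_on_subset[OF corr_holo[OF W I]]) (use i in auto)
    thus "(\<lambda>s. (W h g (t # nths I (- {i})) - W h g (I[i := s])) / (t - s)) holomorphic_on cutdom T - {t}"
      by (intro holomorphic_intros) auto
  next
    fix s assume s: "s \<in> cutdom T - {t}"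
    have "{j. j < length I \<and> j \<in> - {i}} = {..<length I} - {i}" by auto
    hence len: "length (nths I (- {i})) = length I - 1" using i by (simp add: length_nths)
    have A: "hpoly g (\<lambda>h. W h g (t # nths I (- {i})))"
      by (rule hpoly_belowD[OF IH]) (use len i t(1) I set_nths_subset[of I "- {i}"] in auto)
    have B: "hpoly g (\<lambda>h. W h g (I[i := s]))"
      by (rule hpoly_belowD[OF IH]) (use i s I set_update_subset_insert[of I i s] in auto)
    show "hpoly g (\<lambda>h. (W h g (t # nths I (- {i})) - W h g (I[i := s])) / (t - s))"
      by (intro hpoly_divc hpoly_diff A B)
  qed
qed

text \<open>Off the diagonal, the loop equation expresses W_n^(g) through lower-weight
  correlators, so it inherits polynomiality in the parameter.\<close>
lemma corr_hpoly_offdiag: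
  assumes t: "t \<in> cutdom T" "t \<notin> set I" and I: "set I \<subseteq> cutdom T"
    and IH: "hpoly_below T W (2 * g + Suc (length I))"
  shows "hpoly g (\<lambda>h. W h g (t # I))"
proof (cases "(length I, g) = (0, 0)")
  case True
  hence "(\<lambda>h. W h g (t # I)) = (\<lambda>h. (t - ybr T t) / 2)" using corr_init[OF W t(1)] by auto
  thus ?thesis using hpoly_const by simp
next
  case False
  have "hpoly g (\<lambda>h. loop_rhs W h g t I)"
    unfolding loop_rhs_def
    by (intro hpoly_add loop_deriv_term_hpoly loop_genus_term_hpoly loop_split_term_hpoly
        loop_quotient_term_hpoly t I IH)
  hence "hpoly g (\<lambda>h. loop_rhs W h g t I / ybr T t)" by (rule hpoly_divc)
  moreover have "W h g (t # I) = loop_rhs W h g t I / ybr T t" for h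
    using corr_loop[OF W False t(1) I t(2), of h] ybr_nz[OF T t(1)] by (simp add: field_simps)
  ultimately show ?thesis by simp
qed

text \<open>Polynomiality in the parameter everywhere: on the diagonals it follows from the
  off-diagonal case by continuity of the Lagrange interpolation formula.\<close>
lemma corr_hpoly: "set xs \<subseteq> cutdom T \<Longrightarrow> xs \<noteq> [] \<Longrightarrow> hpoly g (\<lambda>h. W h g xs)"
proof (induction "2 * g + length xs" arbitrary: g xs rule: less_induct)
  case less
  obtain x I where xs: "xs = x # I" using less.prems(2) by (cases xs) auto
  have I: "set I \<subseteq> cutdom T" and x: "x \<in> cutdom T" using less.prems(1) xs by auto
  have IH: "hpoly_below T W (2 * g + Suc (length I))"
    unfolding hpoly_below_def using less.hyps xs by auto
  have L: "W h g (x # I) = (\<Sum>j\<le>g. poly (lagrange_basis g j) h * W (of_nat j) g (x # I))" for h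
  proof (rule eq_by_continuity[where f="\<lambda>t. W h g (t # I)"])
    show "isCont (\<lambda>t. W h g (t # I)) x" by (rule isCont_holo[OF corr_holo_first[OF W I] open_cutdom x])
    have "(\<lambda>t. \<Sum>j\<le>g. poly (lagrange_basis g j) h * W (of_nat j) g (t # I)) holomorphic_on cutdom T"
      by (intro holomorphic_intros corr_holo_first[OF W I])
    thus "isCont (\<lambda>t. \<Sum>j\<le>g. poly (lagrange_basis g j) h * W (of_nat j) g (t # I)) x"
      by (rule isCont_holo[OF _ open_cutdom x])
    show "eventually (\<lambda>t. W h g (t # I) = (\<Sum>j\<le>g. poly (lagrange_basis g j) h * W (of_nat j) g (t # I))) (at x)"
      using eventually_at_avoiding[OF open_cutdom x finite_set[of I]]
      by eventually_elim (rule hpoly_lagrange[OF corr_hpoly_offdiag[OF _ _ I IH]], auto)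
  qed
  show ?case unfolding xs by (rule hpoly_of_lagrange[OF L])
qed

end

section \<open>Recursions for the top coefficients\<close>

definition top1 :: "(complex \<Rightarrow> nat \<Rightarrow> complex list \<Rightarrow> complex) \<Rightarrow> nat \<Rightarrow> complex \<Rightarrow> complex" where
  "top1 W g x = hcoeff (\<lambda>h. W h g [x]) g"
definition top2 :: "(complex \<Rightarrow> nat \<Rightarrow> complex list \<Rightarrow> complex) \<Rightarrow> nat \<Rightarrow> complex \<Rightarrow> complex \<Rightarrow> complex" where
  "top2 W g a b = hcoeff (\<lambda>h. W h g [a, b]) g"

context
  fixes T :: real and W :: "complex \<Rightarrow> nat \<Rightarrow> complex list \<Rightarrow> complex"
  assumes T: "T > 0" and W: "is_corr_family T W"
begin

lemma hpoly_one_point: "x \<in> cutdom T \<Longrightarrow> hpoly g (\<lambda>h. W h g [x])"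
  by (rule corr_hpoly[OF T W]) auto
lemma hpoly_two_point: "a \<in> cutdom T \<Longrightarrow> b \<in> cutdom T \<Longrightarrow> hpoly g (\<lambda>h. W h g [a, b])"
  by (rule corr_hpoly[OF T W]) auto

lemma top1_holo: "top1 W g holomorphic_on cutdom T"
proof -
  have "(\<lambda>t. hcoeff (\<lambda>h. W h g [t]) g) holomorphic_on cutdom T"
    by (rule hpoly_family_deriv(3)[OF open_cutdom cutdom_ii]) (use corr_holo_first[OF W, of "[]"] hpoly_one_point in auto)
  thus ?thesis unfolding top1_def[abs_def] .
qed

lemma top2_holo: "b \<in> cutdom T \<Longrightarrow> (\<lambda>a. top2 W g a b) holomorphic_on cutdom T"
proof -
  assume b: "b \<in> cutdom T"
  have "(\<lambda>t. hcoeff (\<lambda>h. W h g [t, b]) g) holomorphic_on cutdom T"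
    by (rule hpoly_family_deriv(3)[OF open_cutdom cutdom_ii]) (use corr_holo_first[OF W, of "[b]"] hpoly_two_point b in auto)
  thus ?thesis unfolding top2_def .
qed

lemma top1_0: "x \<in> cutdom T \<Longrightarrow> top1 W 0 x = (x - ybr T x) / 2"
proof -
  assume x: "x \<in> cutdom T"
  have "(\<lambda>h. W h 0 [x]) = (\<lambda>h. (x - ybr T x) / 2)" using corr_init[OF W x] by auto
  thus ?thesis unfolding top1_def using hcoeff_const[of "(x - ybr T x) / 2" 0] by simp
qed

lemma hcoeff_deriv_first:
  assumes x: "x \<in> cutdom T" and I: "set I \<subseteq> cutdom T"
  shows "hpoly g (\<lambda>h. deriv (\<lambda>t. W h g (t # I)) x)"
    "hcoeff (\<lambda>h. deriv (\<lambda>t. W h g (t # I)) x) k = deriv (\<lambda>t. hcoeff (\<lambda>h. W h g (t # I)) k) x"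
proof -
  have H: "\<And>h. (\<lambda>t. W h g (t # I)) holomorphic_on cutdom T" by (rule corr_holo_first[OF W I])
  have P: "\<And>t. t \<in> cutdom T \<Longrightarrow> hpoly g (\<lambda>h. W h g (t # I))" by (rule corr_hpoly[OF T W]) (use I in auto)
  show "hpoly g (\<lambda>h. deriv (\<lambda>t. W h g (t # I)) x)" by (rule hpoly_family_deriv(1)[OF open_cutdom x H P])
  show "hcoeff (\<lambda>h. deriv (\<lambda>t. W h g (t # I)) x) k = deriv (\<lambda>t. hcoeff (\<lambda>h. W h g (t # I)) k) x"
    by (rule hpoly_family_deriv(2)[OF open_cutdom x H P])
qed

text \<open>The h-derivative term of the loop equation contributes the derivative of the
  previous top coefficient; the genus-reducing term W^(g-2) has degree g - 2 < g and drops out.\<close>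
lemma hcoeff_deriv_term:
  assumes x: "x \<in> cutdom T" and I: "set I \<subseteq> cutdom T"
  shows "hpoly g (\<lambda>h. if 1 \<le> g then h * deriv (\<lambda>t. W h (g - 1) (t # I)) x else 0)"
    "hcoeff (\<lambda>h. if 1 \<le> g then h * deriv (\<lambda>t. W h (g - 1) (t # I)) x else 0) g =
     (if 1 \<le> g then deriv (\<lambda>t. hcoeff (\<lambda>h. W h (g - 1) (t # I)) (g - 1)) x else 0)"
proof -
  show "hpoly g (\<lambda>h. if 1 \<le> g then h * deriv (\<lambda>t. W h (g - 1) (t # I)) x else 0)"
  proof (rule hpoly_if)
    assume g: "1 \<le> g"
    from hpoly_h[OF hcoeff_deriv_first(1)[OF x I, of "g - 1"]] g
    show "hpoly g (\<lambda>h. h * deriv (\<lambda>t. W h (g - 1) (t # I)) x)" by simp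
  qed (rule hpoly_const)
  show "hcoeff (\<lambda>h. if 1 \<le> g then h * deriv (\<lambda>t. W h (g - 1) (t # I)) x else 0) g =
     (if 1 \<le> g then deriv (\<lambda>t. hcoeff (\<lambda>h. W h (g - 1) (t # I)) (g - 1)) x else 0)"
  proof (cases "1 \<le> g")
    case True
    have "hcoeff (\<lambda>h. h * deriv (\<lambda>t. W h (g - 1) (t # I)) x) (Suc (g - 1)) =
          hcoeff (\<lambda>h. deriv (\<lambda>t. W h (g - 1) (t # I)) x) (g - 1)"
      by (rule hcoeff_h[OF hcoeff_deriv_first(1)[OF x I]])
    thus ?thesis using True hcoeff_deriv_first(2)[OF x I] by simp
  next
    case False thus ?thesis using hcoeff_const[of 0 g] by simp
  qed
qed

lemma hcoeff_genus_term:
  assumes "set L \<subseteq> cutdom T" "L \<noteq> []"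
  shows "hpoly g (\<lambda>h. if 2 \<le> g then W h (g - 2) L else 0)"
    "hcoeff (\<lambda>h. if 2 \<le> g then W h (g - 2) L else 0) g = 0"
proof -
  show "hpoly g (\<lambda>h. if 2 \<le> g then W h (g - 2) L else 0)"
    by (intro hpoly_if hpoly_const hpoly_mono[OF corr_hpoly[OF T W assms]]) auto
  show "hcoeff (\<lambda>h. if 2 \<le> g then W h (g - 2) L else 0) g = 0"
  proof (cases "2 \<le> g")
    case True thus ?thesis using hcoeff_high[OF corr_hpoly[OF T W assms], of "g - 2" g] by simp
  next
    case False thus ?thesis using hcoeff_const[of 0 g] by simp
  qed
qed

lemma top1_rec:
  assumes x: "x \<in> cutdom T" and g: "1 \<le> g"
  shows "ybr T x * top1 W g x = deriv (top1 W (g - 1)) x + (\<Sum>p\<in>{1..<g}. top1 W p x * top1 W (g - p) x)"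
proof -
  have L: "ybr T x * W h g [x] = loop_rhs W h g x []" for h
    by (rule corr_loop[OF W]) (use g x in auto)
  define A where "A = (\<lambda>h. if 1 \<le> g then h * deriv (\<lambda>t. W h (g - 1) [t]) x else 0)"
  define B where "B = (\<lambda>h. if 2 \<le> g then W h (g - 2) [x, x] else 0)"
  define C where "C = (\<lambda>h. \<Sum>p\<le>g. if p = 0 \<or> p = g then 0 else W h p [x] * W h (g - p) [x])"
  have R: "loop_rhs W h g x [] = A h + B h + C h" for h
    unfolding loop_rhs_def A_def B_def C_def by (simp cong: if_cong)
  have iA: "hpoly g A" and hA: "hcoeff A g = deriv (top1 W (g - 1)) x"
    using hcoeff_deriv_term[OF x, of "[]" g] g unfolding A_def top1_def[abs_def] by auto
  have iB: "hpoly g B" and hB: "hcoeff B g = 0" using hcoeff_genus_term[of "[x, x]" g] x unfolding B_def by auto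
  have iC: "hpoly g C" and hC: "hcoeff C g = (\<Sum>p\<le>g. if p = 0 \<or> p = g then 0 else top1 W p x * top1 W (g - p) x)"
    using hpoly_convolution[OF hpoly_one_point[OF x] hpoly_one_point[OF x], where g=g and P="\<lambda>p. p = 0 \<or> p = g"]
    unfolding C_def top1_def by auto
  have "(\<Sum>p\<le>g. if p = 0 \<or> p = g then 0 else top1 W p x * top1 W (g - p) x) = (\<Sum>p\<in>{1..<g}. top1 W p x * top1 W (g - p) x)"
    by (rule sum.mono_neutral_cong_right) auto
  have "hcoeff (\<lambda>h. ybr T x * W h g [x]) g = ybr T x * top1 W g x"
    unfolding top1_def by (rule hcoeff_cmult[OF hpoly_one_point[OF x]])
  also have "(\<lambda>h. ybr T x * W h g [x]) = (\<lambda>h. A h + B h + C h)" using L R by auto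
  also have "hcoeff (\<lambda>h. A h + B h + C h) g = hcoeff A g + hcoeff B g + hcoeff C g"
    using hcoeff_add[OF hpoly_add[OF iA iB] iC] hcoeff_add[OF iA iB] by simp
  finally show ?thesis using hA hB hC \<open>(\<Sum>p\<le>g. _) = _\<close> by simp
qed

lemma loop_rhs_two_point:
  "loop_rhs W h g x [b] =
     (if 1 \<le> g then h * deriv (\<lambda>t. W h (g - 1) [t, b]) x else 0)
   + (if 2 \<le> g then W h (g - 2) [x, x, b] else 0)
   + ((\<Sum>p\<le>g. if p = 0 then 0 else W h p [x] * W h (g - p) [x, b])
     + (\<Sum>p\<le>g. if p = g then 0 else W h p [x, b] * W h (g - p) [x]))
   + deriv (\<lambda>s. (W h g [x] - W h g [s]) / (x - s)) b"
proof -
  have P: "Pow {0::nat} = {{}, {0}}" by auto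
  have PS: "(\<Sum>S\<in>Pow {0::nat}. G S) = G {} + G {0}" for G :: "nat set \<Rightarrow> complex"
    unfolding P by simp
  have m: "- {0::nat} = {n. n \<noteq> 0}" by auto
  show ?thesis unfolding loop_rhs_def by (simp add: lessThan_Suc m PS cong: if_cong)
qed

lemma sum_reverse_upto: "(\<Sum>p\<le>(g::nat). if p = g then 0 else f p (g - p)) = (\<Sum>p\<in>{1..g}. f (g - p) p)"
proof -
  have "(\<Sum>p\<le>g. if p = g then 0 else f p (g - p)) = (\<Sum>p\<in>{..<g}. f p (g - p))"
    by (rule sum.mono_neutral_cong_right) auto
  also have "\<dots> = (\<Sum>p\<in>{1..g}. f (g - p) p)"
    by (rule sum.reindex_bij_witness[of _ "\<lambda>p. g - p" "\<lambda>p. g - p"]) auto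
  finally show ?thesis .
qed

lemma hcoeff_quotient_term:
  assumes x: "x \<in> cutdom T" and b: "b \<in> cutdom T" and xb: "x \<noteq> b"
  shows "hpoly g (\<lambda>h. deriv (\<lambda>s. (W h g [x] - W h g [s]) / (x - s)) b)"
    and "hcoeff (\<lambda>h. deriv (\<lambda>s. (W h g [x] - W h g [s]) / (x - s)) b) g =
         deriv (\<lambda>t. (top1 W g x - top1 W g t) / (x - t)) b"
proof -
  have oS: "open (cutdom T - {x})" by (intro open_Diff open_cutdom) auto
  have bS: "b \<in> cutdom T - {x}" using b xb by auto
  have FH: "(\<lambda>s. (W h g [x] - W h g [s]) / (x - s)) holomorphic_on cutdom T - {x}" for h
  proof -
    have "(\<lambda>s. W h g [s]) holomorphic_on cutdom T - {x}"
      by (rule holomorphic_on_subset[OF corr_holo_first[OF W, of "[]"]]) auto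
    thus ?thesis by (intro holomorphic_intros) auto
  qed
  have FI: "hpoly g (\<lambda>h. (W h g [x] - W h g [s]) / (x - s))" if "s \<in> cutdom T - {x}" for s
    using that x by (intro hpoly_divc hpoly_diff hpoly_one_point) auto
  show "hpoly g (\<lambda>h. deriv (\<lambda>s. (W h g [x] - W h g [s]) / (x - s)) b)"
    by (rule hpoly_family_deriv(1)[OF oS bS FH FI])
  show "hcoeff (\<lambda>h. deriv (\<lambda>s. (W h g [x] - W h g [s]) / (x - s)) b) g = deriv (\<lambda>t. (top1 W g x - top1 W g t) / (x - t)) b"
  proof -
    have "hcoeff (\<lambda>h. deriv (\<lambda>s. (W h g [x] - W h g [s]) / (x - s)) b) g = deriv (\<lambda>s. hcoeff (\<lambda>h. (W h g [x] - W h g [s]) / (x - s)) g) b"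
      by (rule hpoly_family_deriv(2)[OF oS bS FH FI])
    also have "\<dots> = deriv (\<lambda>t. (top1 W g x - top1 W g t) / (x - t)) b"
    proof (rule deriv_cong_ev[OF _ refl])
      show "eventually (\<lambda>s. hcoeff (\<lambda>h. (W h g [x] - W h g [s]) / (x - s)) g = (top1 W g x - top1 W g s) / (x - s)) (nhds b)"
        using eventually_nhds_in_open[OF oS bS]
      proof eventually_elim
        case (elim s)
        show ?case unfolding top1_def using elim x
          by (subst hcoeff_divc[OF hpoly_diff[OF hpoly_one_point hpoly_one_point]]) (auto simp: hcoeff_diff[OF hpoly_one_point hpoly_one_point])
      qed
    qed
    finally show ?thesis .
  qed
qed

lemma top2_rec:
  assumes x: "x \<in> cutdom T" and b: "b \<in> cutdom T" and xb: "x \<noteq> b"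
  shows "ybr T x * top2 W g x b = (if 1 \<le> g then deriv (\<lambda>a. top2 W (g - 1) a b) x else 0)
     + 2 * (\<Sum>p\<in>{1..g}. top1 W p x * top2 W (g - p) x b)
     + deriv (\<lambda>t. (top1 W g x - top1 W g t) / (x - t)) b"
proof -
  have L: "ybr T x * W h g [x, b] = loop_rhs W h g x [b]" for h
    by (rule corr_loop[OF W]) (use x b xb in auto)
  define A where "A = (\<lambda>h. if 1 \<le> g then h * deriv (\<lambda>t. W h (g - 1) [t, b]) x else 0)"
  define B where "B = (\<lambda>h. if 2 \<le> g then W h (g - 2) [x, x, b] else 0)"
  define C1 where "C1 = (\<lambda>h. \<Sum>p\<le>g. if p = 0 then 0 else W h p [x] * W h (g - p) [x, b])"
  define C2 where "C2 = (\<lambda>h. \<Sum>p\<le>g. if p = g then 0 else W h p [x, b] * W h (g - p) [x])"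
  define D where "D = (\<lambda>h. deriv (\<lambda>s. (W h g [x] - W h g [s]) / (x - s)) b)"
  have R: "loop_rhs W h g x [b] = A h + B h + (C1 h + C2 h) + D h" for h
    unfolding loop_rhs_two_point A_def B_def C1_def C2_def D_def by simp
  have iA: "hpoly g A" and hA: "hcoeff A g = (if 1 \<le> g then deriv (\<lambda>a. top2 W (g - 1) a b) x else 0)"
    using hcoeff_deriv_term[OF x, of "[b]" g] b unfolding A_def top2_def by auto
  have iB: "hpoly g B" and hB: "hcoeff B g = 0" using hcoeff_genus_term[of "[x, x, b]" g] x b unfolding B_def by auto
  have iC1: "hpoly g C1" and hC1: "hcoeff C1 g = (\<Sum>p\<le>g. if p = 0 then 0 else top1 W p x * top2 W (g - p) x b)"
    using hpoly_convolution[OF hpoly_one_point[OF x] hpoly_two_point[OF x b], where g=g and P="\<lambda>p. p = 0"]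
    unfolding C1_def top1_def top2_def by auto
  have iC2: "hpoly g C2" and hC2: "hcoeff C2 g = (\<Sum>p\<le>g. if p = g then 0 else top2 W p x b * top1 W (g - p) x)"
    using hpoly_convolution[OF hpoly_two_point[OF x b] hpoly_one_point[OF x], where g=g and P="\<lambda>p. p = g"]
    unfolding C2_def top1_def top2_def by auto
  have s1: "(\<Sum>p\<le>g. if p = 0 then 0 else top1 W p x * top2 W (g - p) x b) = (\<Sum>p\<in>{1..g}. top1 W p x * top2 W (g - p) x b)"
    by (rule sum.mono_neutral_cong_right) auto
  have s2: "(\<Sum>p\<le>g. if p = g then 0 else top2 W p x b * top1 W (g - p) x) = (\<Sum>p\<in>{1..g}. top1 W p x * top2 W (g - p) x b)"
    using sum_reverse_upto[of g "\<lambda>p q. top2 W p x b * top1 W q x"] by (simp add: mult.commute)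
  have iD: "hpoly g D" and hD: "hcoeff D g = deriv (\<lambda>t. (top1 W g x - top1 W g t) / (x - t)) b"
    unfolding D_def by (rule hcoeff_quotient_term[OF x b xb])+
  have "hcoeff (\<lambda>h. ybr T x * W h g [x, b]) g = ybr T x * top2 W g x b"
    unfolding top2_def by (rule hcoeff_cmult[OF hpoly_two_point[OF x b]])
  also have "(\<lambda>h. ybr T x * W h g [x, b]) = (\<lambda>h. A h + B h + (C1 h + C2 h) + D h)" using L R by auto
  also have "hcoeff (\<lambda>h. A h + B h + (C1 h + C2 h) + D h) g = hcoeff A g + hcoeff B g + (hcoeff C1 g + hcoeff C2 g) + hcoeff D g"
    using hcoeff_add[OF hpoly_add[OF hpoly_add[OF iA iB] hpoly_add[OF iC1 iC2]] iD]
          hcoeff_add[OF hpoly_add[OF iA iB] hpoly_add[OF iC1 iC2]] hcoeff_add[OF iA iB] hcoeff_add[OF iC1 iC2] by simp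
  finally show ?thesis using hA hB hC1 hC2 s1 s2 hD by simp
qed

end

section \<open>Taylor coefficients at the diagonal\<close>

definition tcoeff :: "nat \<Rightarrow> (complex \<Rightarrow> complex) \<Rightarrow> complex \<Rightarrow> complex" where
  "tcoeff m f b = (deriv ^^ m) f b / fact m"

lemma tcoeff_0: "tcoeff 0 f b = f b" by (simp add: tcoeff_def)

lemma tcoeff_cong: "open S \<Longrightarrow> b \<in> S \<Longrightarrow> (\<And>x. x \<in> S \<Longrightarrow> f x = g x) \<Longrightarrow> tcoeff m f b = tcoeff m g b"
  unfolding tcoeff_def
  by (subst higher_deriv_cong_ev[of f g b b m]) (auto elim!: eventually_mono[OF eventually_nhds_in_open])

context
  fixes S :: "complex set" and b :: complex
  assumes S: "open S" "b \<in> S"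
begin

lemma tcoeff_add: "f holomorphic_on S \<Longrightarrow> g holomorphic_on S \<Longrightarrow> tcoeff m (\<lambda>w. f w + g w) b = tcoeff m f b + tcoeff m g b"
  unfolding tcoeff_def using higher_deriv_add[OF _ _ S] by (simp add: add_divide_distrib)

lemma tcoeff_cmult: "f holomorphic_on S \<Longrightarrow> tcoeff m (\<lambda>w. c * f w) b = c * tcoeff m f b"
  unfolding tcoeff_def using higher_deriv_cmult[OF _ S(2) S(1)] by simp

lemma tcoeff_sum: "finite A \<Longrightarrow> (\<And>a. a \<in> A \<Longrightarrow> f a holomorphic_on S) \<Longrightarrow>
  tcoeff m (\<lambda>w. \<Sum>a\<in>A. f a w) b = (\<Sum>a\<in>A. tcoeff m (f a) b)"
proof (induction A rule: finite_induct)
  case empty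
  show ?case unfolding tcoeff_def by simp
next
  case (insert a A)
  have "tcoeff m (\<lambda>w. f a w + (\<Sum>a\<in>A. f a w)) b = tcoeff m (f a) b + tcoeff m (\<lambda>w. \<Sum>a\<in>A. f a w) b"
    by (rule tcoeff_add) (use insert in \<open>auto intro!: holomorphic_intros\<close>)
  thus ?case using insert by simp
qed

lemma tcoeff_mult: "f holomorphic_on S \<Longrightarrow> g holomorphic_on S \<Longrightarrow>
   tcoeff m (\<lambda>w. f w * g w) b = (\<Sum>i\<le>m. tcoeff i f b * tcoeff (m - i) g b)"
proof -
  assume f: "f holomorphic_on S" and g: "g holomorphic_on S"
  have "tcoeff m (\<lambda>w. f w * g w) b = (\<Sum>i = 0..m. of_nat (m choose i) * (deriv ^^ i) f b * (deriv ^^ (m-i)) g b) / fact m"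
    unfolding tcoeff_def using higher_deriv_mult[OF f g S] by simp
  also have "\<dots> = (\<Sum>i = 0..m. of_nat (m choose i) * (deriv ^^ i) f b * (deriv ^^ (m-i)) g b / fact m)"
    by (simp add: sum_divide_distrib)
  also have "\<dots> = (\<Sum>i\<le>m. tcoeff i f b * tcoeff (m - i) g b)"
    unfolding atLeast0AtMost
  proof (intro sum.cong refl)
    fix i assume i: "i \<in> {..m}"
    have "(of_nat (m choose i) :: complex) = fact m / (fact i * fact (m - i))" using i by (simp add: binomial_fact)
    thus "of_nat (m choose i) * (deriv ^^ i) f b * (deriv ^^ (m-i)) g b / fact m = tcoeff i f b * tcoeff (m - i) g b"
      unfolding tcoeff_def by (simp add: field_simps)
  qed
  finally show ?thesis .
qed

lemma tcoeff_deriv: "tcoeff m (deriv f) b = of_nat (Suc m) * tcoeff (Suc m) f b"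
proof -
  have "(deriv ^^ Suc m) f = (deriv ^^ m) (deriv f)" by (simp add: funpow_Suc_right del: funpow.simps)
  moreover have "(fact (Suc m) :: complex) = of_nat (Suc m) * fact m" by simp
  moreover have "(of_nat (Suc m) :: complex) \<noteq> 0" by (simp only: of_nat_eq_0_iff)
  ultimately show ?thesis unfolding tcoeff_def by simp
qed

lemma tcoeff_lin: "tcoeff i (\<lambda>z. z - b) b = (if i = 1 then 1 else 0)"
proof -
  have "(deriv ^^ i) (\<lambda>z. z - b) b = (deriv ^^ i) (\<lambda>z. z) b - (deriv ^^ i) (\<lambda>z. b) b"
    by (rule higher_deriv_diff[OF _ _ S]) auto
  thus ?thesis unfolding tcoeff_def by auto
qed

lemma tcoeff_subconst: "f holomorphic_on S \<Longrightarrow> tcoeff (Suc m) (\<lambda>z. f z - c) b = tcoeff (Suc m) f b"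
proof -
  assume f: "f holomorphic_on S"
  have "(deriv ^^ Suc m) (\<lambda>z. f z - c) b = (deriv ^^ Suc m) f b - (deriv ^^ Suc m) (\<lambda>z. c) b"
    by (rule higher_deriv_diff[OF f _ S]) auto
  thus ?thesis unfolding tcoeff_def by simp
qed

lemma tcoeff_lin_mult: "g holomorphic_on S \<Longrightarrow> tcoeff (Suc m) (\<lambda>z. (z - b) * g z) b = tcoeff m g b"
proof -
  assume g: "g holomorphic_on S"
  have "tcoeff (Suc m) (\<lambda>z. (z - b) * g z) b = (\<Sum>i\<le>Suc m. tcoeff i (\<lambda>z. z - b) b * tcoeff (Suc m - i) g b)"
    by (rule tcoeff_mult[OF _ g]) (auto intro: holomorphic_intros)
  also have "\<dots> = (\<Sum>i\<le>Suc m. if i = 1 then tcoeff m g b else 0)"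
    by (intro sum.cong refl) (auto simp: tcoeff_lin)
  also have "\<dots> = tcoeff m g b" by simp
  finally show ?thesis .
qed

definition dquot :: "(complex \<Rightarrow> complex) \<Rightarrow> complex \<Rightarrow> complex" where
  "dquot f = (\<lambda>z. if z = b then deriv f b else (f z - f b) / (z - b))"

lemma dquot_holo: "f holomorphic_on S \<Longrightarrow> dquot f holomorphic_on S"
  unfolding dquot_def using pole_lemma[of f S b] S interior_open by auto

lemma dquot_eq: "(z - b) * dquot f z = f z - f b"
  unfolding dquot_def by auto

lemma tcoeff_dquot: "f holomorphic_on S \<Longrightarrow> tcoeff m (dquot f) b = tcoeff (Suc m) f b"
proof -
  assume f: "f holomorphic_on S"
  have "tcoeff m (dquot f) b = tcoeff (Suc m) (\<lambda>z. (z - b) * dquot f z) b" by (rule tcoeff_lin_mult[symmetric, OF dquot_holo[OF f]])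
  also have "\<dots> = tcoeff (Suc m) (\<lambda>z. f z - f b) b" by (simp add: dquot_eq)
  also have "\<dots> = tcoeff (Suc m) f b" by (rule tcoeff_subconst[OF f])
  finally show ?thesis .
qed

definition dquot2 :: "(complex \<Rightarrow> complex) \<Rightarrow> complex \<Rightarrow> complex" where
  "dquot2 f = dquot (dquot f)"

lemma dquot2_holo: "f holomorphic_on S \<Longrightarrow> dquot2 f holomorphic_on S"
  unfolding dquot2_def by (intro dquot_holo)

lemma tcoeff_dquot2: "f holomorphic_on S \<Longrightarrow> tcoeff m (dquot2 f) b = tcoeff (Suc (Suc m)) f b"
  unfolding dquot2_def using tcoeff_dquot dquot_holo by simp

lemma dquot2_deriv:
  assumes f: "f holomorphic_on S" and a: "a \<noteq> b"
  shows "deriv (\<lambda>t. (f a - f t) / (a - t)) b = dquot2 f a"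
proof -
  have fd: "(f has_field_derivative deriv f b) (at b)" by (rule holomorphic_derivI[OF f S])
  have "((\<lambda>t. (f a - f t) / (a - t)) has_field_derivative
        ((- deriv f b) * (a - b) - (f a - f b) * (- 1)) / ((a - b) * (a - b))) (at b)"
    using a by (auto intro!: derivative_eq_intros fd)
  hence "deriv (\<lambda>t. (f a - f t) / (a - t)) b = ((- deriv f b) * (a - b) - (f a - f b) * (- 1)) / ((a - b) * (a - b))"
    by (rule DERIV_imp_deriv)
  also have "\<dots> = dquot2 f a"
    unfolding dquot2_def dquot_def using a by (simp add: field_simps)
  finally show ?thesis .
qed

end

context
  fixes T :: real and W :: "complex \<Rightarrow> nat \<Rightarrow> complex list \<Rightarrow> complex" and b :: complex
  assumes T: "T > 0" and W: "is_corr_family T W" and b: "b \<in> cutdom T"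
begin

definition top2_rhs :: "nat \<Rightarrow> complex \<Rightarrow> complex" where
  "top2_rhs g a = (if 1 \<le> g then deriv (\<lambda>a. top2 W (g - 1) a b) a else 0)
     + 2 * (\<Sum>p\<in>{1..g}. top1 W p a * top2 W (g - p) a b) + dquot2 b (top1 W g) a"

lemma top2_rhs_holo: "top2_rhs g holomorphic_on cutdom T"
proof -
  have "(\<lambda>a. if 1 \<le> g then deriv (\<lambda>a. top2 W (g - 1) a b) a else 0) holomorphic_on cutdom T"
    by (cases "1 \<le> g") (auto intro!: holomorphic_intros top2_holo[OF T W b] open_cutdom)
  moreover have "(\<lambda>a. \<Sum>p\<in>{1..g}. top1 W p a * top2 W (g - p) a b) holomorphic_on cutdom T"
    by (intro holomorphic_intros top1_holo[OF T W] top2_holo[OF T W b])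
  moreover have "dquot2 b (top1 W g) holomorphic_on cutdom T"
    by (rule dquot2_holo[OF open_cutdom b top1_holo[OF T W]])
  ultimately show ?thesis unfolding top2_rhs_def[abs_def] by (intro holomorphic_on_add holomorphic_on_mult holomorphic_on_const)
qed

text \<open>The two-point recursion holds also on the diagonal a = b, by continuity.\<close>
lemma top2_rel: "a \<in> cutdom T \<Longrightarrow> ybr T a * top2 W g a b = top2_rhs g a"
proof -
  have off: "ybr T a * top2 W g a b = top2_rhs g a" if a: "a \<in> cutdom T" "a \<noteq> b" for a
    using top2_rec[OF T W a(1) b a(2), of g] dquot2_deriv[OF open_cutdom b top1_holo[OF T W] a(2)]
    unfolding top2_rhs_def by simp
  assume a: "a \<in> cutdom T"
  show ?thesis
  proof (cases "a = b")
    case False thus ?thesis using off a by simp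
  next
    case True
    have "(\<lambda>a. ybr T a * top2 W g a b) b = top2_rhs g b"
    proof (rule eq_by_continuity[where f="\<lambda>a. ybr T a * top2 W g a b" and g="top2_rhs g"])
      show "isCont (\<lambda>a. ybr T a * top2 W g a b) b"
        by (rule isCont_holo[OF _ open_cutdom b]) (intro holomorphic_intros ybr_holo[OF T] top2_holo[OF T W b])
      show "isCont (top2_rhs g) b" by (rule isCont_holo[OF top2_rhs_holo open_cutdom b])
      show "eventually (\<lambda>a. ybr T a * top2 W g a b = top2_rhs g a) (at b)"
        using eventually_at_avoiding[OF open_cutdom b finite.insertI[OF finite.emptyI, of b]] by eventually_elim (use off in auto)
    qed
    thus ?thesis using True by simp
  qed
qed

text \<open>Comparing Taylor coefficients at a = b in y(a) top2 g a b = top2_rhs g a gives a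
  recursion for the Taylor coefficients of top2 at the diagonal.\<close>
lemma taylor_identity:
  "(\<Sum>i\<le>m. tcoeff i (ybr T) b * tcoeff (m - i) (\<lambda>a. top2 W g a b) b) =
     (if 1 \<le> g then of_nat (Suc m) * tcoeff (Suc m) (\<lambda>a. top2 W (g - 1) a b) b else 0)
   + 2 * (\<Sum>p\<in>{1..g}. \<Sum>i\<le>m. tcoeff i (top1 W p) b * tcoeff (m - i) (\<lambda>a. top2 W (g - p) a b) b)
   + tcoeff (Suc (Suc m)) (top1 W g) b"
proof -
  note S = open_cutdom b
  have holo2: "\<And>g. (\<lambda>a. top2 W g a b) holomorphic_on cutdom T" by (rule top2_holo[OF T W b])
  have holo1: "\<And>g. top1 W g holomorphic_on cutdom T" by (rule top1_holo[OF T W])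
  have e0: "(\<Sum>i\<le>m. tcoeff i (ybr T) b * tcoeff (m - i) (\<lambda>a. top2 W g a b) b) = tcoeff m (\<lambda>a. ybr T a * top2 W g a b) b"
    by (rule tcoeff_mult[OF S ybr_holo[OF T] holo2, symmetric])
  have e2: "tcoeff m (\<lambda>a. ybr T a * top2 W g a b) b = tcoeff m (top2_rhs g) b" by (rule tcoeff_cong[OF S top2_rel])
  define A where "A = (\<lambda>a. if 1 \<le> g then deriv (\<lambda>a. top2 W (g - 1) a b) a else 0)"
  define B where "B = (\<lambda>a. 2 * (\<Sum>p\<in>{1..g}. top1 W p a * top2 W (g - p) a b))"
  have hA: "A holomorphic_on cutdom T" unfolding A_def
    by (cases "1 \<le> g") (auto intro!: holomorphic_intros holo2 open_cutdom)
  have hB: "B holomorphic_on cutdom T" unfolding B_def by (intro holomorphic_intros holo1 holo2)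
  have hD: "dquot2 b (top1 W g) holomorphic_on cutdom T" by (rule dquot2_holo[OF S holo1])
  have "top2_rhs g = (\<lambda>a. (A a + B a) + dquot2 b (top1 W g) a)" unfolding top2_rhs_def[abs_def] A_def B_def by simp
  hence e1: "tcoeff m (top2_rhs g) b = tcoeff m A b + tcoeff m B b + tcoeff m (dquot2 b (top1 W g)) b"
    using tcoeff_add[OF S holomorphic_on_add[OF hA hB] hD] tcoeff_add[OF S hA hB] by simp
  have eA: "tcoeff m A b = (if 1 \<le> g then of_nat (Suc m) * tcoeff (Suc m) (\<lambda>a. top2 W (g - 1) a b) b else 0)"
  proof (cases "1 \<le> g")
    case True
    hence "A = deriv (\<lambda>a. top2 W (g - 1) a b)" unfolding A_def by auto
    thus ?thesis using True tcoeff_deriv[OF S] by simp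
  next
    case False
    hence "A = (\<lambda>a. 0)" unfolding A_def by auto
    thus ?thesis using False by (simp add: tcoeff_def)
  qed
  have eB: "tcoeff m B b = 2 * (\<Sum>p\<in>{1..g}. \<Sum>i\<le>m. tcoeff i (top1 W p) b * tcoeff (m - i) (\<lambda>a. top2 W (g - p) a b) b)"
  proof -
    have "tcoeff m B b = 2 * tcoeff m (\<lambda>a. \<Sum>p\<in>{1..g}. top1 W p a * top2 W (g - p) a b) b"
      unfolding B_def by (rule tcoeff_cmult[OF S]) (intro holomorphic_intros holo1 holo2)
    also have "tcoeff m (\<lambda>a. \<Sum>p\<in>{1..g}. top1 W p a * top2 W (g - p) a b) b = (\<Sum>p\<in>{1..g}. tcoeff m (\<lambda>a. top1 W p a * top2 W (g - p) a b) b)"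
      by (rule tcoeff_sum[OF S]) (auto intro!: holomorphic_intros holo1 holo2)
    also have "\<dots> = (\<Sum>p\<in>{1..g}. \<Sum>i\<le>m. tcoeff i (top1 W p) b * tcoeff (m - i) (\<lambda>a. top2 W (g - p) a b) b)"
      by (intro sum.cong refl tcoeff_mult[OF S holo1 holo2])
    finally show ?thesis .
  qed
  have eD: "tcoeff m (dquot2 b (top1 W g)) b = tcoeff (Suc (Suc m)) (top1 W g) b" by (rule tcoeff_dquot2[OF S holo1])
  show ?thesis using e0 e1 e2 eA eB eD by simp
qed

end

section \<open>A class of algebraic functions closed under the recursion\<close>

definition parity :: "complex poly \<Rightarrow> nat \<Rightarrow> bool" where
  "parity P e \<longleftrightarrow> (\<forall>n. odd (n + e) \<longrightarrow> coeff P n = 0)"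

lemma parity_cong: "parity P e \<Longrightarrow> even e = even e' \<Longrightarrow> parity P e'"
  unfolding parity_def by auto

lemma parity_0: "parity 0 e" unfolding parity_def by simp

lemma parity_add: "parity P e \<Longrightarrow> parity Q e \<Longrightarrow> parity (P + Q) e"
  unfolding parity_def by simp

lemma parity_diff: "parity P e \<Longrightarrow> parity Q e \<Longrightarrow> parity (P - Q) e"
  unfolding parity_def by simp

lemma parity_smult: "parity P e \<Longrightarrow> parity (smult c P) e"
  unfolding parity_def by simp

lemma parity_mult: "parity P a \<Longrightarrow> parity Q b \<Longrightarrow> parity (P * Q) (a + b)"
  unfolding parity_def
proof (intro allI impI)
  fix n assume P: "\<forall>n. odd (n + a) \<longrightarrow> coeff P n = 0" and Q: "\<forall>n. odd (n + b) \<longrightarrow> coeff Q n = 0"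
    and n: "odd (n + (a + b))"
  have z: "coeff P i * coeff Q (n - i) = 0" if "i \<le> n" for i
  proof (cases "odd (i + a)")
    case True thus ?thesis using P by simp
  next
    case False
    hence "odd (n - i + b)" using n that by (auto simp: even_add even_diff_nat)
    thus ?thesis using Q by simp
  qed
  have "(\<Sum>i\<le>n. coeff P i * coeff Q (n - i)) = 0" by (intro sum.neutral) (use z in auto)
  thus "coeff (P * Q) n = 0" by (simp add: coeff_mult)
qed

lemma parity_const: "parity [:c:] 0"
  unfolding parity_def by (auto simp: coeff_pCons split: nat.split)

lemma parity_x: "parity [:0, 1:] 1"
  unfolding parity_def by (auto simp: coeff_pCons split: nat.split)

lemma parity_pderiv: "parity P a \<Longrightarrow> parity (pderiv P) (Suc a)"
  unfolding parity_def by (auto simp: coeff_pderiv)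

lemma parity_poly: "parity P e \<Longrightarrow> poly P (- z) = (-1) ^ e * poly P z"
proof -
  assume p: "parity P e"
  have "poly P (- z) = (\<Sum>i\<le>degree P. coeff P i * (- z) ^ i)" by (simp add: poly_altdef)
  also have "\<dots> = (\<Sum>i\<le>degree P. (-1) ^ e * (coeff P i * z ^ i))"
  proof (intro sum.cong refl)
    fix i
    show "coeff P i * (- z) ^ i = (-1) ^ e * (coeff P i * z ^ i)"
    proof (cases "odd (i + e)")
      case True thus ?thesis using p unfolding parity_def by simp
    next
      case False
      hence "even i = even e" by auto
      hence "(-1::complex) ^ i = (-1) ^ e" by (simp add: minus_one_power_iff)
      thus ?thesis by (simp add: power_minus[of z])
    qed
  qed
  also have "\<dots> = (-1) ^ e * poly P z" by (simp add: poly_altdef sum_distrib_left)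
  finally show ?thesis .
qed

text \<open>At infinity such a function behaves like L x^D / x^K.\<close>
definition yform :: "real \<Rightarrow> nat \<Rightarrow> nat \<Rightarrow> nat \<Rightarrow> complex \<Rightarrow> (complex \<Rightarrow> complex) \<Rightarrow> bool" where
  "yform T K D e L f \<longleftrightarrow> (\<exists>E F. degree E \<le> D - 1 \<and> degree F \<le> D \<and> parity E (Suc e) \<and> parity F e
     \<and> coeff E (D - 1) + coeff F D = L
     \<and> (\<forall>x\<in>cutdom T. f x = (poly E x * ybr T x + poly F x) / ybr T x ^ K))"

lemma yformI: "degree E \<le> D - 1 \<Longrightarrow> degree F \<le> D \<Longrightarrow> parity E (Suc e) \<Longrightarrow> parity F e \<Longrightarrow>
   coeff E (D - 1) + coeff F D = L \<Longrightarrow> (\<And>x. x \<in> cutdom T \<Longrightarrow> f x = (poly E x * ybr T x + poly F x) / ybr T x ^ K) \<Longrightarrow>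
   yform T K D e L f"
  unfolding yform_def by blast

lemma yform_eq: "yform T K D e L f \<Longrightarrow> K = K' \<Longrightarrow> D = D' \<Longrightarrow> even e = even e' \<Longrightarrow> L = L' \<Longrightarrow>
   (\<And>x. x \<in> cutdom T \<Longrightarrow> f x = g x) \<Longrightarrow> yform T K' D' e' L' g"
proof -
  assume c: "yform T K D e L f" and e: "K = K'" "D = D'" "even e = even e'" "L = L'"
    and fg: "\<And>x. x \<in> cutdom T \<Longrightarrow> f x = g x"
  then obtain E F where A: "degree E \<le> D - 1" "degree F \<le> D" "parity E (Suc e)" "parity F e"
     "coeff E (D - 1) + coeff F D = L" "\<forall>x\<in>cutdom T. f x = (poly E x * ybr T x + poly F x) / ybr T x ^ K"
    unfolding yform_def by blast
  have p1: "parity E (Suc e')" by (rule parity_cong[OF A(3)]) (use e(3) in simp)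
  have p2: "parity F e'" by (rule parity_cong[OF A(4)]) (use e(3) in simp)
  show ?thesis by (rule yformI[OF _ _ p1 p2]) (use A e fg in auto)
qed

lemma yform_zero: "yform T K D e 0 (\<lambda>x. 0)"
  by (rule yformI[of 0 _ 0]) (auto simp: parity_0)

lemma yform_add: "yform T K D e L1 f \<Longrightarrow> yform T K D e L2 g \<Longrightarrow> yform T K D e (L1 + L2) (\<lambda>x. f x + g x)"
proof -
  assume "yform T K D e L1 f" "yform T K D e L2 g"
  then obtain E1 F1 E2 F2 where A: "degree E1 \<le> D - 1" "degree F1 \<le> D" "parity E1 (Suc e)" "parity F1 e"
     "coeff E1 (D - 1) + coeff F1 D = L1" "\<forall>x\<in>cutdom T. f x = (poly E1 x * ybr T x + poly F1 x) / ybr T x ^ K"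
    and B: "degree E2 \<le> D - 1" "degree F2 \<le> D" "parity E2 (Suc e)" "parity F2 e"
     "coeff E2 (D - 1) + coeff F2 D = L2" "\<forall>x\<in>cutdom T. g x = (poly E2 x * ybr T x + poly F2 x) / ybr T x ^ K"
    unfolding yform_def by blast
  show ?thesis
  proof (rule yformI[of "E1 + E2" _ "F1 + F2"])
    show "degree (E1 + E2) \<le> D - 1" using A B by (intro order.trans[OF degree_add_le_max]) auto
    show "degree (F1 + F2) \<le> D" using A B by (intro order.trans[OF degree_add_le_max]) auto
    show "parity (E1 + E2) (Suc e)" "parity (F1 + F2) e" using A B by (auto intro: parity_add)
    show "coeff (E1 + E2) (D - 1) + coeff (F1 + F2) D = L1 + L2" using A(5) B(5) by (simp add: algebra_simps)
    show "f x + g x = (poly (E1 + E2) x * ybr T x + poly (F1 + F2) x) / ybr T x ^ K" if "x \<in> cutdom T" for x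
      using A(6) B(6) that by (simp add: add_divide_distrib[symmetric] algebra_simps)
  qed
qed

lemma yform_cmult: "yform T K D e L f \<Longrightarrow> yform T K D e (c * L) (\<lambda>x. c * f x)"
proof -
  assume "yform T K D e L f"
  then obtain E1 F1 where A: "degree E1 \<le> D - 1" "degree F1 \<le> D" "parity E1 (Suc e)" "parity F1 e"
     "coeff E1 (D - 1) + coeff F1 D = L" "\<forall>x\<in>cutdom T. f x = (poly E1 x * ybr T x + poly F1 x) / ybr T x ^ K"
    unfolding yform_def by blast
  show ?thesis
  proof (rule yformI[of "smult c E1" _ "smult c F1"])
    show "degree (smult c E1) \<le> D - 1" using A order.trans[OF degree_smult_le] by blast
    show "degree (smult c F1) \<le> D" using A order.trans[OF degree_smult_le] by blast
    show "parity (smult c E1) (Suc e)" "parity (smult c F1) e" using A by (auto intro: parity_smult)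
    show "coeff (smult c E1) (D - 1) + coeff (smult c F1) D = c * L" using A(5) by (auto simp: algebra_simps)
    show "c * f x = (poly (smult c E1) x * ybr T x + poly (smult c F1) x) / ybr T x ^ K" if "x \<in> cutdom T" for x
      using A(6) that by (simp add: algebra_simps)
  qed
qed

lemma yform_sum: "finite A \<Longrightarrow> (\<And>a. a \<in> A \<Longrightarrow> yform T K D e (L a) (f a)) \<Longrightarrow>
   yform T K D e (\<Sum>a\<in>A. L a) (\<lambda>x. \<Sum>a\<in>A. f a x)"
proof (induction A rule: finite_induct)
  case empty thus ?case using yform_zero by simp
next
  case (insert a A)
  have "yform T K D e (L a + (\<Sum>a\<in>A. L a)) (\<lambda>x. f a x + (\<Sum>a\<in>A. f a x))"
    by (rule yform_add) (use insert in auto)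
  thus ?case using insert by simp
qed

lemma yform_diff: "yform T K D e L1 f \<Longrightarrow> yform T K D e L2 g \<Longrightarrow> yform T K D e (L1 - L2) (\<lambda>x. f x - g x)"
  using yform_add[of T K D e L1 f "(-1) * L2" "\<lambda>x. (-1) * g x"] yform_cmult[of T K D e L2 g "-1"] by simp

lemma yform_divy: "T > 0 \<Longrightarrow> yform T K D e L f \<Longrightarrow> yform T (Suc K) D e L (\<lambda>x. f x / ybr T x)"
proof -
  assume T: "T > 0" and "yform T K D e L f"
  then obtain E F where A: "degree E \<le> D - 1" "degree F \<le> D" "parity E (Suc e)" "parity F e"
     "coeff E (D - 1) + coeff F D = L" "\<forall>x\<in>cutdom T. f x = (poly E x * ybr T x + poly F x) / ybr T x ^ K"
    unfolding yform_def by blast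
  show ?thesis by (rule yformI[OF A(1-5)]) (use A(6) in \<open>auto simp: divide_divide_eq_left\<close>)
qed

definition ysq :: "real \<Rightarrow> complex poly" where "ysq T = [:- 4 * complex_of_real T, 0, 1:]"

lemma poly_ysq: "T > 0 \<Longrightarrow> x \<in> cutdom T \<Longrightarrow> poly (ysq T) x = ybr T x ^ 2"
  using ybr_sq[OF cutdom_nz] by (simp add: ysq_def power2_eq_square algebra_simps)

lemma degree_ysq: "degree (ysq T) = 2" by (simp add: ysq_def)
lemma coeff_ysq2: "coeff (ysq T) 2 = 1" by (simp add: ysq_def numeral_2_eq_2)
lemma parity_ysq: "parity (ysq T) 0" unfolding ysq_def parity_def by (auto simp: coeff_pCons split: nat.split)

lemma degree_mult_ysq:
  assumes "degree E1 \<le> D1 - 1" "degree E2 \<le> D2 - 1" "D1 \<ge> 1" "D2 \<ge> 1"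
  shows "degree (E1 * E2 * ysq T) \<le> D1 + D2"
  using degree_mult_le[of "E1 * E2" "ysq T"] degree_mult_le[of E1 E2] assms degree_ysq[of T] by linarith

lemma coeff_top_mult_ysq:
  assumes E1: "degree E1 \<le> D1 - 1" and E2: "degree E2 \<le> D2 - 1" and D: "D1 \<ge> 1" "D2 \<ge> 1"
  shows "coeff (E1 * E2 * ysq T) (D1 + D2) = coeff E1 (D1 - 1) * coeff E2 (D2 - 1)"
proof -
  have "coeff (E1 * E2 * ysq T) ((D1 - 1) + (D2 - 1) + 2) = coeff (E1 * E2) ((D1 - 1) + (D2 - 1)) * coeff (ysq T) 2"
    by (rule coeff_mult_top) (use degree_mult_le[of E1 E2] E1 E2 degree_ysq[of T] in auto)
  also have "coeff (E1 * E2) ((D1 - 1) + (D2 - 1)) = coeff E1 (D1 - 1) * coeff E2 (D2 - 1)"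
    by (rule coeff_mult_top[OF E1 E2])
  also have "(D1 - 1) + (D2 - 1) + 2 = D1 + D2" using D by simp
  finally show ?thesis using coeff_ysq2[of T] by simp
qed

text \<open>Products: multiplying out uses y^2 = x^2 - 4T; the invariants L multiply.\<close>
lemma yform_mult:
  assumes T: "T > 0" and f: "yform T K1 D1 e1 L1 f" and g: "yform T K2 D2 e2 L2 g" and D: "D1 \<ge> 1" "D2 \<ge> 1"
  shows "yform T (K1 + K2) (D1 + D2) (e1 + e2) (L1 * L2) (\<lambda>x. f x * g x)"
proof -
  obtain E1 F1 where A: "degree E1 \<le> D1 - 1" "degree F1 \<le> D1" "parity E1 (Suc e1)" "parity F1 e1"
     "coeff E1 (D1 - 1) + coeff F1 D1 = L1" "\<forall>x\<in>cutdom T. f x = (poly E1 x * ybr T x + poly F1 x) / ybr T x ^ K1"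
    using f unfolding yform_def by blast
  obtain E2 F2 where B: "degree E2 \<le> D2 - 1" "degree F2 \<le> D2" "parity E2 (Suc e2)" "parity F2 e2"
     "coeff E2 (D2 - 1) + coeff F2 D2 = L2" "\<forall>x\<in>cutdom T. g x = (poly E2 x * ybr T x + poly F2 x) / ybr T x ^ K2"
    using g unfolding yform_def by blast
  define E where "E = E1 * F2 + E2 * F1"
  define F where "F = F1 * F2 + E1 * E2 * ysq T"
  have dE1: "degree (E1 * F2) \<le> D1 + D2 - 1"
    using degree_mult_le[of E1 F2] A(1) B(2) D by linarith
  have dE2: "degree (E2 * F1) \<le> D1 + D2 - 1"
    using degree_mult_le[of E2 F1] A(2) B(1) D by linarith
  have dF1: "degree (F1 * F2) \<le> D1 + D2"
    using degree_mult_le[of F1 F2] A(2) B(2) by linarith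
  have dF2: "degree (E1 * E2 * ysq T) \<le> D1 + D2"
    by (rule degree_mult_ysq[OF A(1) B(1) D])
  show ?thesis
  proof (rule yformI[of E _ F])
    show "degree E \<le> D1 + D2 - 1" unfolding E_def using dE1 dE2 by (intro order.trans[OF degree_add_le_max]) auto
    show "degree F \<le> D1 + D2" unfolding F_def using dF1 dF2 by (intro order.trans[OF degree_add_le_max]) auto
    have "parity (E1 * F2) (Suc e1 + e2)" by (rule parity_mult[OF A(3) B(4)])
    moreover have "parity (E2 * F1) (Suc e2 + e1)" by (rule parity_mult[OF B(3) A(4)])
    ultimately show "parity E (Suc (e1 + e2))" unfolding E_def by (intro parity_add) (auto elim: parity_cong)
    have "parity (F1 * F2) (e1 + e2)" by (rule parity_mult[OF A(4) B(4)])
    moreover have "parity (E1 * E2 * ysq T) (Suc e1 + Suc e2 + 0)" by (intro parity_mult A(3) B(3) parity_ysq)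
    ultimately show "parity F (e1 + e2)" unfolding F_def by (intro parity_add) (auto elim: parity_cong)
    have c1: "coeff (E1 * F2) (D1 + D2 - 1) = coeff E1 (D1 - 1) * coeff F2 D2"
      using coeff_mult_top[OF A(1) B(2)] D by (simp add: add.commute add_diff_assoc2)
    have c2: "coeff (E2 * F1) (D1 + D2 - 1) = coeff E2 (D2 - 1) * coeff F1 D1"
      using coeff_mult_top[OF B(1) A(2)] D by (simp add: add.commute add_diff_assoc2)
    have c3: "coeff (F1 * F2) (D1 + D2) = coeff F1 D1 * coeff F2 D2" by (rule coeff_mult_top[OF A(2) B(2)])
    have c4: "coeff (E1 * E2 * ysq T) (D1 + D2) = coeff E1 (D1 - 1) * coeff E2 (D2 - 1)"
      by (rule coeff_top_mult_ysq[OF A(1) B(1) D])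
    show "coeff E (D1 + D2 - 1) + coeff F (D1 + D2) = L1 * L2"
      unfolding E_def F_def using c1 c2 c3 c4 by (simp add: A(5)[symmetric] B(5)[symmetric] algebra_simps)
    fix x assume x: "x \<in> cutdom T"
    have y: "ybr T x \<noteq> 0" by (rule ybr_nz[OF T x])
    have "f x * g x = ((poly E1 x * ybr T x + poly F1 x) * (poly E2 x * ybr T x + poly F2 x)) / (ybr T x ^ K1 * ybr T x ^ K2)"
      using A(6) B(6) x by simp
    also have "(poly E1 x * ybr T x + poly F1 x) * (poly E2 x * ybr T x + poly F2 x) =
       poly E x * ybr T x + poly F x"
      unfolding E_def F_def using poly_ysq[OF T x] by (simp add: algebra_simps power2_eq_square)
    finally show "f x * g x = (poly E x * ybr T x + poly F x) / ybr T x ^ (K1 + K2)" by (simp add: power_add)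
  qed
qed

lemma coeff_x_mult: "coeff ([:0, 1:] * (P :: complex poly)) (Suc n) = coeff P n"
  by (simp add: coeff_pCons)

text \<open>Derivative of (E y + F) / y^K, using y' = x / y and y^2 = x^2 - 4T.\<close>
lemma deriv_yform_expr:
  assumes T: "T > 0" and x: "x \<in> cutdom T"
  shows "((\<lambda>x. (poly E x * ybr T x + poly F x) / ybr T x ^ K) has_field_derivative
     (poly (pderiv E * ysq T + smult (1 - of_nat K) ([:0, 1:] * E)) x * ybr T x
      + poly (pderiv F * ysq T - smult (of_nat K) ([:0, 1:] * F)) x) / ybr T x ^ (K + 2)) (at x)"
proof -
  define y where "y = ybr T x"
  have y0: "y \<noteq> 0" unfolding y_def by (rule ybr_nz[OF T x])
  have q: "poly (ysq T) x = y^2" unfolding y_def by (rule poly_ysq[OF T x])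
  have dy: "(ybr T has_field_derivative x / y) (at x)" unfolding y_def by (rule ybr_deriv(1)[OF T x])
  have D: "((\<lambda>x. (poly E x * ybr T x + poly F x) / ybr T x ^ K) has_field_derivative
     ((poly (pderiv E) x * y + poly E x * (x / y) + poly (pderiv F) x) * y ^ K
      - (poly E x * y + poly F x) * (of_nat K * (x / y) * y ^ (K - 1))) / (y ^ K * y ^ K)) (at x)"
    unfolding y_def
    by (rule derivative_eq_intros poly_DERIV dy[unfolded y_def] refl | simp add: y0[unfolded y_def] mult_ac)+
  have Eq: "((poly (pderiv E) x * y + poly E x * (x / y) + poly (pderiv F) x) * y ^ K
      - (poly E x * y + poly F x) * (of_nat K * (x / y) * y ^ (K - 1))) / (y ^ K * y ^ K) =
      (poly (pderiv E * ysq T + smult (1 - of_nat K) ([:0, 1:] * E)) x * y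
      + poly (pderiv F * ysq T - smult (of_nat K) ([:0, 1:] * F)) x) / y ^ (K + 2)"
  proof (cases K)
    case 0 thus ?thesis using y0 q by (simp add: field_simps power2_eq_square)
  next
    case (Suc k) thus ?thesis using y0 q by (simp add: field_simps power2_eq_square)
  qed
  show ?thesis using DERIV_cong[OF D Eq] unfolding y_def .
qed

lemma degree_pderiv_mult_ysq: "degree (P :: complex poly) \<le> n \<Longrightarrow> degree (pderiv P * ysq T) \<le> n + 1"
proof (cases "pderiv P = 0")
  case False
  assume "degree P \<le> n"
  moreover have "degree P \<ge> 1" using False pderiv_eq_0_iff[of P] by simp
  ultimately show ?thesis using degree_mult_le[of "pderiv P" "ysq T"] degree_pderiv[of P] degree_ysq[of T] by linarith
qed simp

lemma coeff_pderiv_mult_ysq: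
  assumes "degree (P :: complex poly) \<le> D - 1" "D \<ge> 1"
  shows "coeff (pderiv P * ysq T) D = of_nat (D - 1) * coeff P (D - 1)"
proof (cases "D \<ge> 2")
  case True
  have dP: "degree (pderiv P) \<le> D - 2" using assms degree_pderiv[of P] by simp
  have "coeff (pderiv P * ysq T) ((D - 2) + 2) = coeff (pderiv P) (D - 2) * coeff (ysq T) 2"
    by (rule coeff_mult_top[OF dP]) (simp add: degree_ysq)
  moreover have "(D - 2) + 2 = D" "Suc (D - 2) = D - 1" using True by auto
  ultimately show ?thesis by (simp add: coeff_ysq2 coeff_pderiv)
next
  case False
  hence "D = 1" using assms by simp
  hence "degree P = 0" using assms by simp
  hence "pderiv P = 0" by (simp add: pderiv_eq_0_iff)
  thus ?thesis using \<open>D = 1\<close> by simp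
qed

lemma top_coeff_deriv:
  assumes E: "degree E \<le> D - 1" and F: "degree F \<le> D" and D: "D \<ge> 1"
  shows "coeff (pderiv E * ysq T + smult (1 - of_nat K) ([:0, 1:] * E)) D
       + coeff (pderiv F * ysq T - smult (of_nat K) ([:0, 1:] * F)) (D + 1)
       = (of_nat D - of_nat K) * (coeff E (D - 1) + coeff F D)"
proof -
  have c1: "coeff (pderiv E * ysq T) D = of_nat (D - 1) * coeff E (D - 1)" by (rule coeff_pderiv_mult_ysq[OF E D])
  have c2: "coeff (pderiv F * ysq T) (D + 1) = of_nat D * coeff F D"
    using coeff_pderiv_mult_ysq[of F "D + 1" T] F by simp
  have c3: "coeff ([:0, 1:] * E) D = coeff E (D - 1)" using coeff_x_mult[of E "D - 1"] D by simp
  have c4: "coeff ([:0, 1:] * F) (D + 1) = coeff F D" using coeff_x_mult[of F D] by simp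
  have oD: "(of_nat (D - 1) :: complex) = of_nat D - 1" using D by (simp add: of_nat_diff)
  have "coeff (pderiv E * ysq T + smult (1 - of_nat K) ([:0, 1:] * E)) D
      = (of_nat D - 1) * coeff E (D - 1) + (1 - of_nat K) * coeff E (D - 1)"
    using c1 c3 oD by (simp only: coeff_add coeff_smult)
  moreover have "coeff (pderiv F * ysq T - smult (of_nat K) ([:0, 1:] * F)) (D + 1)
      = of_nat D * coeff F D - of_nat K * coeff F D"
    using c2 c4 by (simp only: coeff_diff coeff_smult)
  ultimately show ?thesis by (simp add: algebra_simps)
qed

lemma yform_deriv:
  assumes T: "T > 0" and f: "yform T K D e L f" and D: "D \<ge> 1"
  shows "yform T (K + 2) (D + 1) (Suc e) ((of_nat D - of_nat K) * L) (deriv f)"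
proof -
  obtain E F where A: "degree E \<le> D - 1" "degree F \<le> D" "parity E (Suc e)" "parity F e"
     "coeff E (D - 1) + coeff F D = L" "\<forall>x\<in>cutdom T. f x = (poly E x * ybr T x + poly F x) / ybr T x ^ K"
    using f unfolding yform_def by blast
  define E' where "E' = pderiv E * ysq T + smult (1 - of_nat K) ([:0, 1:] * E)"
  define F' where "F' = pderiv F * ysq T - smult (of_nat K) ([:0, 1:] * F)"
  show ?thesis
  proof (rule yformI[of E' _ F'])
    have d1: "degree (pderiv E * ysq T) \<le> D" using degree_pderiv_mult_ysq[OF A(1), of T] D by simp
    have d2: "degree ([:0, 1:] * E) \<le> D" using degree_mult_le[of "[:0, 1:]" E] A(1) D by simp
    show "degree E' \<le> D + 1 - 1" unfolding E'_def
      using d1 d2 by (intro order.trans[OF degree_add_le_max]) (auto intro: order.trans[OF degree_smult_le])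
    have d3: "degree (pderiv F * ysq T) \<le> D + 1" by (rule degree_pderiv_mult_ysq[OF A(2)])
    have d4: "degree ([:0, 1:] * F) \<le> D + 1" using degree_mult_le[of "[:0, 1:]" F] A(2) by simp
    show "degree F' \<le> D + 1" unfolding F'_def
      using d3 d4 by (intro order.trans[OF degree_diff_le_max]) (auto intro: order.trans[OF degree_smult_le])
    have "parity (pderiv E * ysq T) (Suc (Suc e) + 0)" by (intro parity_mult parity_pderiv A(3) parity_ysq)
    moreover have "parity ([:0, 1:] * E) (1 + Suc e)" by (intro parity_mult parity_x A(3))
    ultimately show "parity E' (Suc (Suc e))" unfolding E'_def by (intro parity_add parity_smult) (auto elim: parity_cong)
    have "parity (pderiv F * ysq T) (Suc e + 0)" by (intro parity_mult parity_pderiv A(4) parity_ysq)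
    moreover have "parity ([:0, 1:] * F) (1 + e)" by (intro parity_mult parity_x A(4))
    ultimately show "parity F' (Suc e)" unfolding F'_def by (intro parity_diff parity_smult) (auto elim: parity_cong)
    show "coeff E' (D + 1 - 1) + coeff F' (D + 1) = (of_nat D - of_nat K) * L"
      using top_coeff_deriv[OF A(1,2) D, of T K] A(5) unfolding E'_def F'_def by simp
    fix x assume x: "x \<in> cutdom T"
    have "deriv f x = deriv (\<lambda>x. (poly E x * ybr T x + poly F x) / ybr T x ^ K) x"
      by (rule deriv_cong_ev[OF _ refl]) (use eventually_nhds_in_open[OF open_cutdom x] A(6) in \<open>auto elim!: eventually_mono\<close>)
    also have "\<dots> = (poly E' x * ybr T x + poly F' x) / ybr T x ^ (K + 2)"
      unfolding E'_def F'_def by (rule DERIV_imp_deriv[OF deriv_yform_expr[OF T x]])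
    finally show "deriv f x = (poly E' x * ybr T x + poly F' x) / ybr T x ^ (K + 2)" .
  qed
qed

lemma yform_hderiv:
  assumes T: "T > 0" and f: "yform T K D e 0 f" and D: "D \<ge> 1"
  shows "yform T (K + 2 * k) (D + k) (e + k) 0 ((deriv ^^ k) f)"
proof (induction k)
  case 0 thus ?case using f by simp
next
  case (Suc k)
  have "yform T (K + 2 * k + 2) (D + k + 1) (Suc (e + k)) ((of_nat (D + k) - of_nat (K + 2 * k)) * 0) (deriv ((deriv ^^ k) f))"
    by (rule yform_deriv[OF T Suc.IH]) (use D in simp)
  thus ?case by simp
qed

section \<open>The top coefficients belong to the class\<close>

definition taylor2 :: "(complex \<Rightarrow> nat \<Rightarrow> complex list \<Rightarrow> complex) \<Rightarrow> nat \<Rightarrow> nat \<Rightarrow> complex \<Rightarrow> complex" where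
  "taylor2 W g m b = tcoeff m (\<lambda>a. top2 W g a b) b"

context
  fixes T :: real and W :: "complex \<Rightarrow> nat \<Rightarrow> complex list \<Rightarrow> complex"
  assumes T: "T > 0" and W: "is_corr_family T W"
begin

lemma yform_deriv_y: "yform T 1 1 1 1 (deriv (ybr T))"
proof (rule yformI[of 0 _ "[:0, 1:]"])
  show "parity 0 (Suc 1)" by (rule parity_0)
  show "parity [:0, 1:] 1" by (rule parity_x)
  fix x assume x: "x \<in> cutdom T"
  show "deriv (ybr T) x = (poly 0 x * ybr T x + poly [:0, 1:] x) / ybr T x ^ 1"
    using ybr_deriv(2)[OF T x] by simp
qed auto

lemma yform_taylor_y: "k \<ge> 1 \<Longrightarrow> yform T (2 * k - 1) k k (if k = 1 then 1 / fact k else 0) (\<lambda>b. tcoeff k (ybr T) b)"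
proof -
  assume k: "k \<ge> 1"
  have "yform T (2 * k - 1) k k (if k = 1 then 1 else 0) ((deriv ^^ k) (ybr T))"
  proof (cases "k = 1")
    case True thus ?thesis using yform_deriv_y by simp
  next
    case False
    then obtain j where j: "k = Suc (Suc j)" using k by (cases k; cases "k - 1") auto
    have c2: "yform T (1 + 2) (1 + 1) (Suc 1) ((of_nat 1 - of_nat 1) * 1) (deriv (deriv (ybr T)))"
      by (rule yform_deriv[OF T yform_deriv_y]) simp
    have "yform T (3 + 2 * j) (2 + j) (2 + j) 0 ((deriv ^^ j) (deriv (deriv (ybr T))))"
      by (rule yform_hderiv[OF T]) (use c2 in \<open>auto elim!: yform_eq\<close>)
    moreover have "(deriv ^^ k) (ybr T) = (deriv ^^ j) (deriv (deriv (ybr T)))"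
      unfolding j by (simp add: funpow_Suc_right del: funpow.simps)
    ultimately show ?thesis using j False by (auto elim!: yform_eq)
  qed
  from yform_cmult[OF this, of "1 / fact k"] show ?thesis
    unfolding tcoeff_def[abs_def] by (auto elim!: yform_eq)
qed

lemma yform_deriv_top1_0: "yform T 1 1 1 0 (deriv (top1 W 0))"
proof (rule yformI[of "[:1/2:]" _ "[:0, -1/2:]"])
  show "parity [:1/2:] (Suc 1)" by (rule parity_cong[OF parity_const]) simp
  show "parity [:0, -1/2:] 1" using parity_smult[OF parity_x, of "-1/2"] by simp
  fix x assume x: "x \<in> cutdom T"
  have "deriv (top1 W 0) x = deriv (\<lambda>x. (x - ybr T x) / 2) x"
    by (rule deriv_cong_ev[OF _ refl]) (use eventually_nhds_in_open[OF open_cutdom x] top1_0[OF T W] in \<open>auto elim!: eventually_mono\<close>)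
  also have "\<dots> = (1 - x / ybr T x) / 2"
    by (rule DERIV_imp_deriv) (auto intro!: derivative_eq_intros ybr_deriv(1)[OF T x])
  also have "\<dots> = (poly [:1/2:] x * ybr T x + poly [:0, -1/2:] x) / ybr T x ^ 1"
    using ybr_nz[OF T x] by (simp add: field_simps)
  finally show "deriv (top1 W 0) x = (poly [:1/2:] x * ybr T x + poly [:0, -1/2:] x) / ybr T x ^ 1" .
qed auto

lemma yform_top1: "p \<ge> 1 \<Longrightarrow> yform T (3 * p - 1) p p 0 (top1 W p)"
proof (induction p rule: less_induct)
  case (less p)
  show ?case
  proof (cases "p = 1")
    case True
    have "yform T (Suc 1) 1 1 0 (\<lambda>x. deriv (top1 W 0) x / ybr T x)" by (rule yform_divy[OF T yform_deriv_top1_0])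
    moreover have "top1 W 1 x = deriv (top1 W 0) x / ybr T x" if "x \<in> cutdom T" for x
      using top1_rec[OF T W that, of 1] ybr_nz[OF T that] by (simp add: field_simps)
    ultimately show ?thesis using True by (auto elim!: yform_eq)
  next
    case False
    then obtain q where q: "p = Suc q" "q \<ge> 1" using less.prems by (cases p) auto
    have a: "yform T (3 * q - 1 + 2) (q + 1) (Suc q) ((of_nat q - of_nat (3 * q - 1)) * 0) (deriv (top1 W q))"
      by (rule yform_deriv[OF T less.IH]) (use q in auto)
    have b: "yform T (3 * q + 1) (q + 1) (q + 1) 0 (\<lambda>x. \<Sum>r\<in>{1..<p}. top1 W r x * top1 W (p - r) x)"
    proof -
      have "yform T (3 * q + 1) (q + 1) (q + 1) (\<Sum>r\<in>{1..<p}. 0) (\<lambda>x. \<Sum>r\<in>{1..<p}. top1 W r x * top1 W (p - r) x)"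
      proof (rule yform_sum)
        fix r assume r: "r \<in> {1..<p}"
        have "yform T ((3 * r - 1) + (3 * (p - r) - 1)) (r + (p - r)) (r + (p - r)) (0 * 0) (\<lambda>x. top1 W r x * top1 W (p - r) x)"
          by (rule yform_mult[OF T less.IH less.IH]) (use r in auto)
        thus "yform T (3 * q + 1) (q + 1) (q + 1) 0 (\<lambda>x. top1 W r x * top1 W (p - r) x)"
          by (rule yform_eq) (use r q in auto)
      qed simp
      thus ?thesis by simp
    qed
    have c: "yform T (3 * q + 1) (q + 1) (q + 1) 0 (\<lambda>x. deriv (top1 W q) x + (\<Sum>r\<in>{1..<p}. top1 W r x * top1 W (p - r) x))"
      using yform_add[OF yform_eq[OF a _ _ _ _ refl] b] q by auto
    have "yform T (Suc (3 * q + 1)) (q + 1) (q + 1) 0 (\<lambda>x. (deriv (top1 W q) x + (\<Sum>r\<in>{1..<p}. top1 W r x * top1 W (p - r) x)) / ybr T x)"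
      by (rule yform_divy[OF T c])
    moreover have "top1 W p x = (deriv (top1 W q) x + (\<Sum>r\<in>{1..<p}. top1 W r x * top1 W (p - r) x)) / ybr T x" if "x \<in> cutdom T" for x
      using top1_rec[OF T W that, of p] ybr_nz[OF T that] q by (simp add: field_simps)
    ultimately show ?thesis using q by (auto elim!: yform_eq)
  qed
qed

lemma yform_taylor_top1: "p \<ge> 1 \<or> k \<ge> 1 \<Longrightarrow> yform T (3 * p + 2 * k - 1) (p + k) (p + k) 0 (\<lambda>b. tcoeff k (top1 W p) b)"
proof -
  assume pk: "p \<ge> 1 \<or> k \<ge> 1"
  have "yform T (3 * p + 2 * k - 1) (p + k) (p + k) 0 ((deriv ^^ k) (top1 W p))"
  proof (cases "p \<ge> 1")
    case True
    have "yform T (3 * p - 1 + 2 * k) (p + k) (p + k) 0 ((deriv ^^ k) (top1 W p))"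
      by (rule yform_hderiv[OF T yform_top1[OF True]]) (use True in simp)
    thus ?thesis using True by (auto elim!: yform_eq)
  next
    case False
    hence p0: "p = 0" and k: "k \<ge> 1" using pk by auto
    then obtain j where j: "k = Suc j" by (cases k) auto
    have "yform T (1 + 2 * j) (1 + j) (1 + j) 0 ((deriv ^^ j) (deriv (top1 W 0)))"
      by (rule yform_hderiv[OF T yform_deriv_top1_0]) simp
    moreover have "(deriv ^^ k) (top1 W 0) = (deriv ^^ j) (deriv (top1 W 0))"
      unfolding j by (simp add: funpow_Suc_right del: funpow.simps)
    ultimately show ?thesis using p0 j by (auto elim!: yform_eq)
  qed
  from yform_cmult[OF this, of "1 / fact k"] show ?thesis unfolding tcoeff_def[abs_def] by (auto elim!: yform_eq)
qed

text \<open>The recursion for C_{g,m}, solved for C_{g,m}: the right-hand side only involves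
  C_{g',m'} with g' < g, or with g' = g and m' < m.\<close>
lemma taylor2_rec:
  assumes b: "b \<in> cutdom T"
  shows "ybr T b * taylor2 W g m b =
      (if 1 \<le> g then of_nat (Suc m) * taylor2 W (g - 1) (Suc m) b else 0)
    + 2 * (\<Sum>p\<in>{1..g}. \<Sum>i\<le>m. tcoeff i (top1 W p) b * taylor2 W (g - p) (m - i) b)
    + tcoeff (Suc (Suc m)) (top1 W g) b
    - (\<Sum>j<m. tcoeff (Suc j) (ybr T) b * taylor2 W g (m - Suc j) b)"
proof -
  have "(\<Sum>i\<le>m. tcoeff i (ybr T) b * taylor2 W g (m - i) b) =
      (if 1 \<le> g then of_nat (Suc m) * taylor2 W (g - 1) (Suc m) b else 0)
    + 2 * (\<Sum>p\<in>{1..g}. \<Sum>i\<le>m. tcoeff i (top1 W p) b * taylor2 W (g - p) (m - i) b)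
    + tcoeff (Suc (Suc m)) (top1 W g) b"
    unfolding taylor2_def by (rule taylor_identity[OF T W b])
  moreover have "(\<Sum>i\<le>m. tcoeff i (ybr T) b * taylor2 W g (m - i) b) =
      ybr T b * taylor2 W g m b + (\<Sum>j<m. tcoeff (Suc j) (ybr T) b * taylor2 W g (m - Suc j) b)"
    by (subst sum.atMost_shift) (simp add: tcoeff_0)
  ultimately show ?thesis by (simp add: algebra_simps)
qed

text \<open>One step of the double induction: each term of the recursion is in the class with
  exponent 3g + 2m + 3, D = g + m + 2 and invariant 0; dividing by y gives the claim.\<close>
lemma yform_taylor2_step:
  assumes IHg: "\<And>g' m'. g' < g \<Longrightarrow> yform T (3 * g' + 2 * m' + 4) (g' + m' + 2) (g' + m') 0 (taylor2 W g' m')"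
    and IHm: "\<And>m'. m' < m \<Longrightarrow> yform T (3 * g + 2 * m' + 4) (g + m' + 2) (g + m') 0 (taylor2 W g m')"
  shows "yform T (3 * g + 2 * m + 4) (g + m + 2) (g + m) 0 (taylor2 W g m)"
proof -
  define K where "K = 3 * g + 2 * m + 3"
  have genus: "yform T K (g + m + 2) (g + m) 0
      (\<lambda>b. if 1 \<le> g then of_nat (Suc m) * taylor2 W (g - 1) (Suc m) b else 0)"
  proof (cases "1 \<le> g")
    case True
    from yform_cmult[OF IHg[of "g - 1" "Suc m"], of "of_nat (Suc m)"] show ?thesis
      unfolding K_def using True by (auto elim!: yform_eq)
  qed (simp add: yform_zero)
  have split: "yform T K (g + m + 2) (g + m) 0
      (\<lambda>b. 2 * (\<Sum>p\<in>{1..g}. \<Sum>i\<le>m. tcoeff i (top1 W p) b * taylor2 W (g - p) (m - i) b))"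
  proof -
    have "yform T K (g + m + 2) (g + m) (\<Sum>p\<in>{1..g}. \<Sum>i\<le>m. 0)
        (\<lambda>b. \<Sum>p\<in>{1..g}. \<Sum>i\<le>m. tcoeff i (top1 W p) b * taylor2 W (g - p) (m - i) b)"
    proof (intro yform_sum finite_atLeastAtMost finite_atMost)
      fix p i assume p: "p \<in> {1..g}" and i: "i \<in> {..m}"
      have "yform T (3 * p + 2 * i - 1) (p + i) (p + i) 0 (\<lambda>b. tcoeff i (top1 W p) b)"
        by (rule yform_taylor_top1) (use p in auto)
      from yform_mult[OF T this IHg[of "g - p" "m - i"]]
      show "yform T K (g + m + 2) (g + m) 0 (\<lambda>b. tcoeff i (top1 W p) b * taylor2 W (g - p) (m - i) b)"
        unfolding K_def by (rule yform_eq) (use p i in auto)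
    qed
    from yform_cmult[OF this, of 2] show ?thesis by simp
  qed
  have dquot: "yform T K (g + m + 2) (g + m) 0 (\<lambda>b. tcoeff (Suc (Suc m)) (top1 W g) b)"
    unfolding K_def by (rule yform_eq[OF yform_taylor_top1[of g "Suc (Suc m)"]]) auto
  have lower: "yform T K (g + m + 2) (g + m) 0 (\<lambda>b. \<Sum>j<m. tcoeff (Suc j) (ybr T) b * taylor2 W g (m - Suc j) b)"
  proof -
    have "yform T K (g + m + 2) (g + m) (\<Sum>j<m. 0) (\<lambda>b. \<Sum>j<m. tcoeff (Suc j) (ybr T) b * taylor2 W g (m - Suc j) b)"
    proof (intro yform_sum finite_lessThan)
      fix j assume j: "j \<in> {..<m}"
      from yform_mult[OF T yform_taylor_y[of "Suc j"] IHm[of "m - Suc j"]]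
      show "yform T K (g + m + 2) (g + m) 0 (\<lambda>b. tcoeff (Suc j) (ybr T) b * taylor2 W g (m - Suc j) b)"
        unfolding K_def by (rule yform_eq) (use j in auto)
    qed
    thus ?thesis by simp
  qed
  from yform_divy[OF T yform_diff[OF yform_add[OF yform_add[OF genus split] dquot] lower]]
  show ?thesis
    by (rule yform_eq) (use taylor2_rec ybr_nz[OF T] in \<open>auto simp: K_def field_simps\<close>)
qed

lemma yform_taylor2: "yform T (3 * g + 2 * m + 4) (g + m + 2) (g + m) 0 (taylor2 W g m)"
proof (induction g arbitrary: m rule: less_induct)
  case (less g)
  note IHg = less.IH
  show ?case
  proof (induction m rule: less_induct)
    case (less m)
    show ?case by (rule yform_taylor2_step[OF IHg less.IH])
  qed
qed

end

theorem theorem1: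
  fixes T :: real and W :: "complex \<Rightarrow> nat \<Rightarrow> complex list \<Rightarrow> complex" and g :: nat
  assumes "T > 0" and "is_corr_family T W" and "g \<ge> 1"
  shows "\<exists>E F :: complex poly.
           degree E \<le> g + 1 \<and> degree F \<le> g + 2
         \<and> (\<forall>z. poly E (- z) = (-1) ^ (g + 1) * poly E z)
         \<and> (\<forall>z. poly F (- z) = (-1) ^ g * poly F z)
         \<and> coeff E (g + 1) = - coeff F (g + 2)
         \<and> (\<forall>x\<in>cutdom T. w20 W g x = poly E x / ybr T x ^ (3 * g + 3) + poly F x / ybr T x ^ (3 * g + 4))"
proof -
  have "yform T (3 * g + 4) (g + 2) g 0 (taylor2 W g 0)"
    using yform_taylor2[OF assms(1,2), of g 0] by simp
  then obtain E F where A: "degree E \<le> g + 1" "degree F \<le> g + 2" "parity E (Suc g)" "parity F g"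
     "coeff E (g + 1) + coeff F (g + 2) = 0"
     "\<forall>x\<in>cutdom T. taylor2 W g 0 x = (poly E x * ybr T x + poly F x) / ybr T x ^ (3 * g + 4)"
    unfolding yform_def by auto
  have w20: "w20 W g x = taylor2 W g 0 x" for x
    unfolding taylor2_def tcoeff_0 w20_def top2_def ..
  show ?thesis
  proof (intro exI conjI allI ballI)
    show "poly E (- z) = (-1) ^ (g + 1) * poly E z" for z using parity_poly[OF A(3)] by simp
    show "poly F (- z) = (-1) ^ g * poly F z" for z using parity_poly[OF A(4)] by simp
    show "coeff E (g + 1) = - coeff F (g + 2)" using A(5) by (simp add: eq_neg_iff_add_eq_0)
    fix x assume x: "x \<in> cutdom T"
    have "ybr T x ^ (3 * g + 4) = ybr T x * ybr T x ^ (3 * g + 3)"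
      using power_Suc[of "ybr T x" "3 * g + 3"] by (simp add: add.commute)
    thus "w20 W g x = poly E x / ybr T x ^ (3 * g + 3) + poly F x / ybr T x ^ (3 * g + 4)"
      using A(6) x w20 ybr_nz[OF assms(1) x] by (simp add: field_simps)
  qed (use A in auto)
qed

end
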